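(* Every orthogonally convex polygon $P$ has exactly $4$ knobs; more precisely, $P$ has exactly one left knob, exactly one right knob, exactly one top knob and exactly one bottom knob.
   Context: An orthogonal polygon $P$ is orthogonally convex if it is a simply connected polygon with all edges parallel to the $x$- or $y$-axis and the intersection of every line parallel to the $x$-axis or $y$-axis with $P$ is a single (possibly empty) line segment. A vertex is convex if its interior angle is $90^\circ$. A knob is an edge $(v_i,v_{i+1})$ both of whose endpoints are convex. A vertical knob is a left knob if points immediately to its left are outside $P$, and a right knob otherwise; a horizontal knob is a top knob if points immediately above it are outside $P$, and a bottom knob otherwise. *)

theory Defs
  imports "HOL-Analysis.Analysis"
begin

type_synonym pt = "real \<times> real"

definition vtx :: "pt list \<Rightarrow> nat \<Rightarrow> pt" where
  "vtx vs i = vs ! (i mod length vs)"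

definition edge_set :: "pt list \<Rightarrow> nat \<Rightarrow> pt set" where
  "edge_set vs i = closed_segment (vtx vs i) (vtx vs (Suc i))"

definition poly_boundary :: "pt list \<Rightarrow> pt set" where
  "poly_boundary vs = (\<Union>i<length vs. edge_set vs i)"

definition poly_region :: "pt list \<Rightarrow> pt set" where
  "poly_region vs = poly_boundary vs \<union> inside (poly_boundary vs)"

text \<open>Simple orthogonal polygon: distinct vertices, every edge axis-parallel,
  horizontal and vertical edges alternate (every vertex is a genuine corner),
  and edges meet only at common endpoints of consecutive edges.\<close>
definition orthogonal_polygon :: "pt list \<Rightarrow> bool" where
  "orthogonal_polygon vs \<longleftrightarrow>
     4 \<le> length vs \<and> distinct vs \<and>
     (\<forall>i<length vs. fst (vtx vs i) = fst (vtx vs (Suc i)) \<or> snd (vtx vs i) = snd (vtx vs (Suc i))) \<and>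
     (\<forall>i<length vs. (snd (vtx vs i) = snd (vtx vs (Suc i))) \<longleftrightarrow>
                       (fst (vtx vs (Suc i)) = fst (vtx vs (Suc (Suc i))))) \<and>
     (\<forall>i<length vs. \<forall>j<length vs. i \<noteq> j \<longrightarrow>
        edge_set vs i \<inter> edge_set vs j =
          (if Suc i mod length vs = j then {vtx vs (Suc i)}
           else if Suc j mod length vs = i then {vtx vs i} else {}))"

definition single_segment :: "pt set \<Rightarrow> bool" where
  "single_segment S \<longleftrightarrow> S = {} \<or> (\<exists>a b. S = closed_segment a b)"

definition orth_convex_polygon :: "pt list \<Rightarrow> bool" where
  "orth_convex_polygon vs \<longleftrightarrow>
     orthogonal_polygon vs \<and> simply_connected (poly_region vs) \<and>
     (\<forall>c. single_segment ({p. snd p = c} \<inter> poly_region vs)) \<and>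
     (\<forall>c. single_segment ({p. fst p = c} \<inter> poly_region vs))"

text \<open>Vertex i is convex iff its interior angle is 90 degrees: the two incident
  edges are perpendicular and near v_i the polygon coincides with the
  quarter-plane spanned by the two incident edges.\<close>
definition convex_vertex :: "pt list \<Rightarrow> nat \<Rightarrow> bool" where
  "convex_vertex vs i \<longleftrightarrow>
     (let v = vtx vs i; u = vtx vs (i + length vs - 1); w = vtx vs (Suc i) in
       (u - v) \<bullet> (w - v) = 0 \<and>
       (\<exists>e>0. poly_region vs \<inter> ball v e =
           {v + s *\<^sub>R (u - v) + t *\<^sub>R (w - v) | s t. 0 \<le> s \<and> 0 \<le> t} \<inter> ball v e))"

definition knob :: "pt list \<Rightarrow> nat \<Rightarrow> bool" where
  "knob vs i \<longleftrightarrow> convex_vertex vs i \<and> convex_vertex vs (Suc i)"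

definition vertical_edge :: "pt list \<Rightarrow> nat \<Rightarrow> bool" where
  "vertical_edge vs i \<longleftrightarrow> fst (vtx vs i) = fst (vtx vs (Suc i))"

definition horizontal_edge :: "pt list \<Rightarrow> nat \<Rightarrow> bool" where
  "horizontal_edge vs i \<longleftrightarrow> snd (vtx vs i) = snd (vtx vs (Suc i))"

definition left_outside :: "pt list \<Rightarrow> nat \<Rightarrow> bool" where
  "left_outside vs i \<longleftrightarrow>
     (\<forall>p\<in>open_segment (vtx vs i) (vtx vs (Suc i)). \<exists>e>0. \<forall>t. 0 < t \<and> t < e \<longrightarrow>
        p - (t, 0) \<notin> poly_region vs)"

definition above_outside :: "pt list \<Rightarrow> nat \<Rightarrow> bool" where
  "above_outside vs i \<longleftrightarrow>
     (\<forall>p\<in>open_segment (vtx vs i) (vtx vs (Suc i)). \<exists>e>0. \<forall>t. 0 < t \<and> t < e \<longrightarrow>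
        p + (0, t) \<notin> poly_region vs)"

definition left_knob :: "pt list \<Rightarrow> nat \<Rightarrow> bool" where
  "left_knob vs i \<longleftrightarrow> knob vs i \<and> vertical_edge vs i \<and> left_outside vs i"

definition right_knob :: "pt list \<Rightarrow> nat \<Rightarrow> bool" where
  "right_knob vs i \<longleftrightarrow> knob vs i \<and> vertical_edge vs i \<and> \<not> left_outside vs i"

definition top_knob :: "pt list \<Rightarrow> nat \<Rightarrow> bool" where
  "top_knob vs i \<longleftrightarrow> knob vs i \<and> horizontal_edge vs i \<and> above_outside vs i"

definition bottom_knob :: "pt list \<Rightarrow> nat \<Rightarrow> bool" where
  "bottom_knob vs i \<longleftrightarrow> knob vs i \<and> horizontal_edge vs i \<and> \<not> above_outside vs i"

end

theory Submission
  imports Defs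
begin

text \<open>The boundary of P is a simple closed polygonal curve, so by the Jordan curve theorem P is the
  complement of the unbounded component of the complement of its boundary, and every boundary point
  is a limit both of points inside and of points outside. Hence near a point in the middle of a
  vertical edge exactly one side of the edge lies in P, and a right knob is a vertical knob with
  P immediately to its left.

  Near a left knob, P lies to the right of the line of the knob. The vertical slice of P through
  the knob is a segment, hence it is the knob itself, and the connectedness of P then forces all
  of P into the closed half-plane to the right of that line. Two left knobs would thus lie on the
  same vertical line and overlap. Conversely, the vertical edge at a vertex of minimal abscissa
  is a left knob. A rotation by a right angle turns top knobs into left knobs, and rotating twice
  turns right knobs into left knobs.\<close>

lemma closed_segment_vertical:
  "closed_segment (a, y1) (a, y2) = {p :: pt. fst p = a \<and> snd p \<in> closed_segment y1 y2}"
  by (auto simp: closed_segment_def algebra_simps) (metis add.commute)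

lemma closed_segment_horizontal:
  "closed_segment (x1, b) (x2, b) = {p :: pt. snd p = b \<and> fst p \<in> closed_segment x1 x2}"
  by (auto simp: closed_segment_def algebra_simps) (metis add.commute)

lemma open_segment_vertical:
  "open_segment (a, y1) (a, y2) = {p :: pt. fst p = a \<and> snd p \<in> open_segment y1 y2}"
  by (auto simp: open_segment_def closed_segment_vertical)

lemma in_closed_segment_real_iff:
  "(y :: real) \<in> closed_segment y1 y2 \<longleftrightarrow> min y1 y2 \<le> y \<and> y \<le> max y1 y2"
  by (auto simp: closed_segment_eq_real_ivl)

lemma in_open_segment_real_iff:
  "(y :: real) \<in> open_segment y1 y2 \<longleftrightarrow> min y1 y2 < y \<and> y < max y1 y2"
  by (auto simp: open_segment_eq_real_ivl)

lemma in_closed_segment_offset_iff: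
  "(\<alpha> :: real) \<noteq> 0 \<Longrightarrow> y \<in> closed_segment b (b + \<alpha>) \<longleftrightarrow> 0 \<le> \<alpha> * (y - b) \<and> \<bar>y - b\<bar> \<le> \<bar>\<alpha>\<bar>"
  by (cases "\<alpha> > 0") (auto simp: closed_segment_eq_real_ivl zero_le_mult_iff abs_le_iff)

lemma in_vertical_arm_iff:
  "(\<alpha> :: real) \<noteq> 0 \<Longrightarrow> (z :: pt) \<in> closed_segment (a, b) (a, b + \<alpha>) \<longleftrightarrow>
     fst z = a \<and> 0 \<le> \<alpha> * (snd z - b) \<and> \<bar>snd z - b\<bar> \<le> \<bar>\<alpha>\<bar>"
  using in_closed_segment_offset_iff[of \<alpha> "snd z" b] by (simp add: closed_segment_vertical)

lemma in_horizontal_arm_iff: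
  "(\<beta> :: real) \<noteq> 0 \<Longrightarrow> (z :: pt) \<in> closed_segment (a, b) (a + \<beta>, b) \<longleftrightarrow>
     snd z = b \<and> 0 \<le> \<beta> * (fst z - a) \<and> \<bar>fst z - a\<bar> \<le> \<bar>\<beta>\<bar>"
  using in_closed_segment_offset_iff[of \<beta> "fst z" a] by (simp add: closed_segment_horizontal)

lemma dist_Pair_le_sum_abs: "dist (x1 :: real, y1 :: real) (x2, y2) \<le> \<bar>x1 - x2\<bar> + \<bar>y1 - y2\<bar>"
  using sqrt_sum_squares_le_sum_abs[of "x1 - x2" "y1 - y2"]
  by (simp add: dist_Pair_Pair dist_real_def)

lemma abs_fst_diff_le_dist: "\<bar>fst z - fst w\<bar> \<le> dist z (w :: pt)"
  by (metis dist_fst_le dist_real_def)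

lemma abs_snd_diff_le_dist: "\<bar>snd z - snd w\<bar> \<le> dist z (w :: pt)"
  by (metis dist_snd_le dist_real_def)

lemma convex_fst_ge: "convex {z :: pt. m \<le> fst z}"
proof -
  have "{z :: pt. m \<le> fst z} = {z. (1, 0) \<bullet> z \<ge> m}" by (auto simp: inner_prod_def)
  then show ?thesis using convex_halfspace_ge by metis
qed

lemma convex_fst_gt: "convex {z :: pt. c < \<beta> * (fst z - a)}"
proof -
  have "{z :: pt. c < \<beta> * (fst z - a)} = {z. (\<beta>, 0) \<bullet> z > c + \<beta> * a}"
    by (auto simp: inner_prod_def algebra_simps)
  then show ?thesis using convex_halfspace_gt by metis
qed

lemma convex_snd_gt: "convex {z :: pt. c < \<alpha> * (snd z - b)}"
proof -
  have "{z :: pt. c < \<alpha> * (snd z - b)} = {z. (0, \<alpha>) \<bullet> z > c + \<alpha> * b}"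
    by (auto simp: inner_prod_def algebra_simps)
  then show ?thesis using convex_halfspace_gt by metis
qed

lemma convex_snd_lt: "convex {z :: pt. \<alpha> * (snd z - b) < c}"
proof -
  have "{z :: pt. \<alpha> * (snd z - b) < c} = {z. (0, \<alpha>) \<bullet> z < c + \<alpha> * b}"
    by (auto simp: inner_prod_def algebra_simps)
  then show ?thesis using convex_halfspace_lt by metis
qed

lemma convex_in_halfspace_if_near_point:
  fixes S :: "'a :: real_normed_vector set" and g :: "'a \<Rightarrow> real"
  assumes "convex S" "x \<in> S" "y \<in> S" "linear g" "e > 0"
    and near: "\<forall>w\<in>S. dist w x < e \<longrightarrow> 0 \<le> g (w - x)"
  shows "0 \<le> g (y - x)"
proof (cases "y = x")
  case True
  then show ?thesis using linear_0[OF \<open>linear g\<close>] by simp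
next
  case False
  define n where "n = norm (y - x)"
  have "n > 0" using False by (simp add: n_def)
  define l where "l = e / (2 * (n + e))"
  have l: "0 < l" "l \<le> 1" "l * norm (y - x) < e"
    using \<open>n > 0\<close> \<open>e > 0\<close> by (simp_all add: l_def n_def[symmetric] field_simps add_pos_pos)
  define w where "w = x + l *\<^sub>R (y - x)"
  have "w = (1 - l) *\<^sub>R x + l *\<^sub>R y" by (simp add: w_def algebra_simps)
  then have "w \<in> S" using \<open>convex S\<close> \<open>x \<in> S\<close> \<open>y \<in> S\<close> l by (simp add: convex_def)
  moreover have "dist w x < e" using l by (simp add: w_def dist_norm)
  ultimately have "0 \<le> l * g (y - x)"
    using near linear_cmul[OF \<open>linear g\<close>] by (fastforce simp: w_def)
  then show ?thesis using l(1) by (simp add: zero_le_mult_iff)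
qed

lemma fst_gt_if_open_subset_halfplane:
  assumes "open U" "U \<subseteq> {z :: pt. a \<le> fst z}" "z \<in> U"
  shows "a < fst z"
proof -
  obtain e where "e > 0" "ball z e \<subseteq> U" using assms(1,3) open_contains_ball by blast
  moreover have "z - (e / 2, 0) \<in> ball z e" using \<open>e > 0\<close> by (simp add: dist_norm)
  ultimately have "z - (e / 2, 0) \<in> {z. a \<le> fst z}" using assms(2) by blast
  then show ?thesis using \<open>e > 0\<close> by simp
qed

definition quadrant :: "pt \<Rightarrow> real \<Rightarrow> real \<Rightarrow> pt set" where
  "quadrant v \<alpha> \<beta> = {z. 0 \<le> \<alpha> * (snd z - snd v) \<and> 0 \<le> \<beta> * (fst z - fst v)}"

lemma cone_commute:
  fixes u v w :: "'a :: real_vector"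
  shows "{v + s *\<^sub>R (u - v) + t *\<^sub>R (w - v) | s t. 0 \<le> s \<and> 0 \<le> t} =
         {v + s *\<^sub>R (w - v) + t *\<^sub>R (u - v) | s t. 0 \<le> s \<and> 0 \<le> t}"
proof -
  have "{v + s *\<^sub>R (u - v) + t *\<^sub>R (w - v) | s t. 0 \<le> s \<and> 0 \<le> t} \<subseteq>
        {v + s *\<^sub>R (w - v) + t *\<^sub>R (u - v) | s t. 0 \<le> s \<and> 0 \<le> t}" for u w :: 'a
  proof
    fix z assume "z \<in> {v + s *\<^sub>R (u - v) + t *\<^sub>R (w - v) | s t. 0 \<le> s \<and> 0 \<le> t}"
    then obtain s t where "z = v + s *\<^sub>R (u - v) + t *\<^sub>R (w - v)" "0 \<le> s" "0 \<le> t" by blast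
    then show "z \<in> {v + s *\<^sub>R (w - v) + t *\<^sub>R (u - v) | s t. 0 \<le> s \<and> 0 \<le> t}"
      by (intro CollectI exI[of _ t] exI[of _ s]) (simp add: algebra_simps)
  qed
  then show ?thesis by blast
qed

lemma cone_eq_quadrant:
  assumes "u = v + (0, \<alpha>)" "w = v + (\<beta>, 0)" "\<alpha> \<noteq> 0" "\<beta> \<noteq> 0"
  shows "{v + s *\<^sub>R (u - v) + t *\<^sub>R (w - v) | s t. 0 \<le> s \<and> 0 \<le> t} = quadrant v \<alpha> \<beta>"
proof (intro set_eqI iffI)
  fix z assume "z \<in> {v + s *\<^sub>R (u - v) + t *\<^sub>R (w - v) | s t. 0 \<le> s \<and> 0 \<le> t}"
  then obtain s t where "0 \<le> s" "0 \<le> t" "z = v + s *\<^sub>R (0, \<alpha>) + t *\<^sub>R (\<beta>, 0)"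
    using assms by auto
  then show "z \<in> quadrant v \<alpha> \<beta>"
    by (simp add: quadrant_def mult.left_commute[of \<alpha>] mult.left_commute[of \<beta>])
next
  fix z assume "z \<in> quadrant v \<alpha> \<beta>"
  then have "0 \<le> (snd z - snd v) / \<alpha>" "0 \<le> (fst z - fst v) / \<beta>"
    by (auto simp: quadrant_def zero_le_divide_iff zero_le_mult_iff)
  moreover have "z = v + ((snd z - snd v) / \<alpha>) *\<^sub>R (u - v) + ((fst z - fst v) / \<beta>) *\<^sub>R (w - v)"
    using assms by (simp add: prod_eq_iff)
  ultimately show "z \<in> {v + s *\<^sub>R (u - v) + t *\<^sub>R (w - v) | s t. 0 \<le> s \<and> 0 \<le> t}"
    by blast
qed

lemma eq_pred_mod_if_Suc_mod_eq:
  fixes n :: nat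
  assumes "k < n" "Suc k mod n = j mod n"
  shows "k = (j + n - 1) mod n"
proof -
  have "(j + (n - 1)) mod n = (Suc k + (n - 1)) mod n"
    using assms by (metis mod_add_left_eq)
  also have "Suc k + (n - 1) = k + n" using assms(1) by simp
  finally show ?thesis using assms(1) by simp
qed

locale orth_polygon =
  fixes vs :: "pt list"
  assumes orthogonal: "orthogonal_polygon vs"
begin

abbreviation v :: "nat \<Rightarrow> pt" where "v i \<equiv> vtx vs i"
abbreviation edge :: "nat \<Rightarrow> pt set" where "edge i \<equiv> edge_set vs i"
abbreviation bdry :: "pt set" where "bdry \<equiv> poly_boundary vs"
abbreviation region :: "pt set" where "region \<equiv> poly_region vs"

lemma four_le_length: "4 \<le> length vs"
  using orthogonal by (simp add: orthogonal_polygon_def)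

lemma length_pos: "0 < length vs"
  using four_le_length by (cases vs) auto

lemma v_mod [simp]: "v (i mod length vs) = v i"
  by (simp add: vtx_def)

lemma v_add_length [simp]: "v (i + length vs) = v i"
  by (simp add: vtx_def)

lemma v_Suc_mod [simp]: "v (Suc (i mod length vs)) = v (Suc i)"
  by (simp add: vtx_def mod_Suc_eq)

lemma v_Suc_add_length [simp]: "v (Suc (i + length vs)) = v (Suc i)"
  using v_add_length[of "Suc i"] by simp

lemma Suc_pred_add_length: "Suc (i + length vs - 1) = i + length vs"
  using length_pos by simp

lemma v_Suc_pred [simp]: "v (Suc (i + length vs - 1)) = v i" "v (Suc (i + length vs - Suc 0)) = v i"
  by (simp_all only: One_nat_def[symmetric] Suc_pred_add_length v_add_length)

lemma edge_mod [simp]: "edge (i mod length vs) = edge i"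
  by (simp add: edge_set_def)

lemma edge_eq: "edge i = closed_segment (v i) (v (Suc i))"
  by (simp add: edge_set_def)

lemma horizontal_edge_add_length [simp]:
  "horizontal_edge vs (i + length vs) \<longleftrightarrow> horizontal_edge vs i"
  by (simp add: horizontal_edge_def)

lemma v_eq_iff: "v i = v j \<longleftrightarrow> i mod length vs = j mod length vs"
  using orthogonal length_pos by (simp add: orthogonal_polygon_def vtx_def nth_eq_iff_index_eq)

lemma v_Suc_neq: "v (Suc i) \<noteq> v i"
proof -
  have "i mod length vs < length vs" using length_pos by simp
  then have "Suc i mod length vs \<noteq> i mod length vs" using four_le_length by (simp add: mod_Suc)
  then show ?thesis by (simp add: v_eq_iff)
qed

lemma vertical_or_horizontal: "vertical_edge vs i \<or> horizontal_edge vs i"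
proof -
  have "i mod length vs < length vs" using length_pos by simp
  then have "fst (v (i mod length vs)) = fst (v (Suc (i mod length vs))) \<or>
             snd (v (i mod length vs)) = snd (v (Suc (i mod length vs)))"
    using orthogonal unfolding orthogonal_polygon_def by blast
  then show ?thesis by (simp add: vertical_edge_def horizontal_edge_def)
qed

lemma not_vertical_and_horizontal: "\<not> (vertical_edge vs i \<and> horizontal_edge vs i)"
  using v_Suc_neq[of i] by (auto simp: vertical_edge_def horizontal_edge_def prod_eq_iff)

lemma vertical_iff_horizontal_Suc: "vertical_edge vs i \<longleftrightarrow> horizontal_edge vs (Suc i)"
proof -
  have "i mod length vs < length vs" using length_pos by simp
  then have "snd (v (i mod length vs)) = snd (v (Suc (i mod length vs))) \<longleftrightarrow>
             fst (v (Suc (i mod length vs))) = fst (v (Suc (Suc (i mod length vs))))"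
    using orthogonal unfolding orthogonal_polygon_def by blast
  moreover have "v (Suc (Suc (i mod length vs))) = v (Suc (Suc i))"
    unfolding vtx_def by (metis mod_Suc_eq)
  ultimately have "horizontal_edge vs i \<longleftrightarrow> vertical_edge vs (Suc i)"
    by (simp add: vertical_edge_def horizontal_edge_def)
  then show ?thesis
    using vertical_or_horizontal not_vertical_and_horizontal by blast
qed

lemma vertical_pred_iff_horizontal: "vertical_edge vs (j + length vs - 1) \<longleftrightarrow> horizontal_edge vs j"
  using vertical_iff_horizontal_Suc[of "j + length vs - 1"]
  by (simp only: Suc_pred_add_length horizontal_edge_add_length)

lemma edge_Int_edge:
  assumes "i mod length vs \<noteq> j mod length vs"
  shows "edge i \<inter> edge j =
    (if Suc i mod length vs = j mod length vs then {v (Suc i)}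
     else if Suc j mod length vs = i mod length vs then {v i} else {})"
proof -
  have "i mod length vs < length vs" "j mod length vs < length vs" using length_pos by simp_all
  then have "edge (i mod length vs) \<inter> edge (j mod length vs) =
      (if Suc (i mod length vs) mod length vs = j mod length vs then {v (Suc (i mod length vs))}
       else if Suc (j mod length vs) mod length vs = i mod length vs then {v (i mod length vs)}
       else {})"
    using orthogonal assms unfolding orthogonal_polygon_def by blast
  then show ?thesis by (simp add: mod_Suc_eq)
qed

lemma vertical_edgeE:
  assumes "vertical_edge vs i"
  obtains a y1 y2 where "v i = (a, y1)" "v (Suc i) = (a, y2)" "y1 \<noteq> y2"
  using assms v_Suc_neq[of i] that unfolding vertical_edge_def by (metis prod.collapse)

lemma edge_vertical:
  "v i = (a, y1) \<Longrightarrow> v (Suc i) = (a, y2) \<Longrightarrow>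
     edge i = {p. fst p = a \<and> min y1 y2 \<le> snd p \<and> snd p \<le> max y1 y2}"
  by (simp add: edge_eq closed_segment_vertical in_closed_segment_real_iff)

lemma open_edge_vertical:
  "v i = (a, y1) \<Longrightarrow> v (Suc i) = (a, y2) \<Longrightarrow>
     open_segment (v i) (v (Suc i)) = {p. fst p = a \<and> min y1 y2 < snd p \<and> snd p < max y1 y2}"
  by (simp add: open_segment_vertical in_open_segment_real_iff)

lemma bdry_eq: "bdry = (\<Union>i<length vs. edge i)"
  by (simp add: poly_boundary_def)

lemma edge_subset_bdry: "edge i \<subseteq> bdry"
proof -
  have "i mod length vs < length vs" using length_pos by simp
  then show ?thesis unfolding bdry_eq by (metis edge_mod UN_upper lessThan_iff)
qed

lemma v_in_bdry: "v i \<in> bdry"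
  using edge_subset_bdry[of i] by (auto simp: edge_eq)

lemma compact_bdry: "compact bdry"
  unfolding bdry_eq edge_eq by (auto intro!: compact_UN)

lemma closed_bdry: "closed bdry"
  using compact_bdry compact_imp_closed by blast

lemma region_eq_compl_outside: "region = - outside bdry"
  by (simp add: poly_region_def union_with_inside)

lemma bdry_subset_region: "bdry \<subseteq> region"
  by (simp add: poly_region_def)

lemma inside_subset_region: "inside bdry \<subseteq> region"
  by (simp add: poly_region_def)

lemma region_iff_on_connected:
  assumes "connected C" "C \<inter> bdry = {}" "x \<in> C" "y \<in> C"
  shows "x \<in> region \<longleftrightarrow> y \<in> region"
proof -
  have "connected_component (- bdry) x y" "connected_component (- bdry) y x"
    using assms by (auto intro: connected_componentI)
  then show ?thesis
    unfolding region_eq_compl_outside using outside_same_component by blast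
qed

end

section \<open>The boundary is a Jordan curve\<close>

lemma bounded_component_subset_inside:
  assumes "C \<in> components (- S)" "bounded C"
  shows "C \<subseteq> inside S"
proof
  fix x assume "x \<in> C"
  obtain y where "C = connected_component_set (- S) y"
    using assms(1) by (auto simp: components_iff)
  then have "connected_component_set (- S) x = C" "x \<notin> S"
    using \<open>x \<in> C\<close> connected_component_eq assms(1) in_components_subset by blast+
  then show "x \<in> inside S" using assms(2) by (simp add: inside_def)
qed

primrec edge_chain :: "pt list \<Rightarrow> nat \<Rightarrow> real \<Rightarrow> pt" where
  "edge_chain vs 0 = linepath (vtx vs 0) (vtx vs 1)"
| "edge_chain vs (Suc k) = edge_chain vs k +++ linepath (vtx vs (Suc k)) (vtx vs (Suc (Suc k)))"

lemma pathstart_edge_chain [simp]: "pathstart (edge_chain vs k) = vtx vs 0"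
  by (induction k) auto

lemma pathfinish_edge_chain [simp]: "pathfinish (edge_chain vs k) = vtx vs (Suc k)"
  by (induction k) auto

lemma path_image_edge_chain: "path_image (edge_chain vs k) = (\<Union>j\<le>k. edge_set vs j)"
  by (induction k) (simp_all add: path_image_join edge_set_def atMost_Suc Un_commute)

context orth_polygon
begin

lemma arc_edge_chain: "Suc k < length vs \<Longrightarrow> arc (edge_chain vs k)"
proof (induction k)
  case 0
  then show ?case using v_Suc_neq[of 0] by simp
next
  case (Suc k)
  have "edge j \<inter> edge (Suc k) \<subseteq> {v (Suc k)}" if "j \<le> k" for j
  proof -
    have "j mod length vs = j" "Suc k mod length vs = Suc k" "Suc (Suc k) mod length vs = Suc (Suc k)"
      using Suc.prems that by auto
    then show ?thesis
      using edge_Int_edge[of j "Suc k"] that by (auto split: if_splits simp: v_eq_iff)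
  qed
  then have "path_image (edge_chain vs k) \<inter> closed_segment (v (Suc k)) (v (Suc (Suc k))) \<subseteq> {v (Suc k)}"
    by (auto simp: path_image_edge_chain edge_eq)
  then show ?case
    using Suc v_Suc_neq[of "Suc k"] by (auto intro!: arc_join)
qed

definition boundary_loop :: "real \<Rightarrow> pt" where
  "boundary_loop = edge_chain vs (length vs - 2) +++ linepath (v (length vs - 1)) (v 0)"

lemma last_edge_eq: "edge (length vs - 1) = closed_segment (v (length vs - 1)) (v 0)"
proof -
  have "Suc (length vs - 1) = 0 + length vs" using length_pos by simp
  then show ?thesis by (simp only: edge_eq v_add_length)
qed

lemma pathfinish_chain_eq: "pathfinish (edge_chain vs (length vs - 2)) = v (length vs - 1)"
  using four_le_length by (simp add: Suc_diff_Suc numeral_2_eq_2)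

lemma simple_path_boundary_loop: "simple_path boundary_loop"
  unfolding boundary_loop_def
proof (rule simple_path_join_loop)
  show "arc (edge_chain vs (length vs - 2))"
    using four_le_length by (intro arc_edge_chain) simp
  show "arc (linepath (v (length vs - 1)) (v 0))"
    using four_le_length by (simp add: v_eq_iff)
  have "edge j \<inter> edge (length vs - 1) \<subseteq> {v 0, v (length vs - 1)}" if "j \<le> length vs - 2" for j
  proof -
    have "j mod length vs = j" "(length vs - 1) mod length vs = length vs - 1"
         "Suc (length vs - 1) = length vs"
      using four_le_length that by auto
    then show ?thesis
      using edge_Int_edge[of j "length vs - 1"] four_le_length that
      by (auto split: if_splits simp: v_eq_iff)
  qed
  then show "path_image (edge_chain vs (length vs - 2)) \<inter> path_image (linepath (v (length vs - 1)) (v 0))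
    \<subseteq> {pathstart (edge_chain vs (length vs - 2)), pathstart (linepath (v (length vs - 1)) (v 0))}"
    using last_edge_eq by (auto simp: path_image_edge_chain)
qed (use four_le_length in \<open>simp_all add: Suc_diff_Suc numeral_2_eq_2\<close>)

lemma path_image_boundary_loop: "path_image boundary_loop = bdry"
proof -
  have "{..<length vs} = insert (length vs - 1) {..length vs - 2}" using four_le_length by auto
  then have "bdry = edge (length vs - 1) \<union> (\<Union>j\<le>length vs - 2. edge j)"
    unfolding bdry_eq by auto
  then show ?thesis
    using pathfinish_chain_eq last_edge_eq
    by (simp add: boundary_loop_def path_image_join path_image_edge_chain Un_commute)
qed

lemma pathfinish_boundary_loop: "pathfinish boundary_loop = pathstart boundary_loop"
  by (simp add: boundary_loop_def)

lemma bdry_homeomorphic_sphere: "bdry homeomorphic sphere (0 :: pt) 1"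
proof -
  have "bdry homeomorphic sphere (0 :: complex) 1"
    using homeomorphic_simple_path_image_circle[OF simple_path_boundary_loop pathfinish_boundary_loop, of 1 0]
    by (simp add: path_image_boundary_loop)
  moreover have "sphere (0 :: complex) 1 homeomorphic sphere (0 :: pt) 1"
    by (rule homeomorphic_spheres_gen) auto
  ultimately show ?thesis using homeomorphic_trans by blast
qed

lemma bounded_bdry: "bounded bdry"
  using compact_bdry compact_imp_bounded by blast

lemma bdry_subset_closure_inside: "bdry \<subseteq> closure (inside bdry)"
proof -
  have "\<not> connected (- bdry)"
    using Jordan_Brouwer_separation[OF bdry_homeomorphic_sphere] by simp
  then obtain C where C: "C \<in> components (- bdry)" "bounded C"
    using cobounded_has_bounded_component[of "- bdry"] bounded_bdry by auto
  have "frontier C = bdry"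
    using Jordan_Brouwer_frontier[OF bdry_homeomorphic_sphere C(1)] by simp
  moreover have "closure C \<subseteq> closure (inside bdry)"
    by (rule closure_mono[OF bounded_component_subset_inside[OF C]])
  ultimately show ?thesis unfolding frontier_def by blast
qed

lemma bdry_subset_closure_outside: "bdry \<subseteq> closure (outside bdry)"
proof -
  have "outside bdry \<in> components (- bdry)"
    using bounded_unique_outside[where S = bdry and c = "outside bdry"] bounded_bdry by simp
  then have "frontier (outside bdry) = bdry"
    using Jordan_Brouwer_frontier[OF bdry_homeomorphic_sphere] by simp
  then show ?thesis unfolding frontier_def by blast
qed

lemma inside_point_near_bdry:
  assumes "p \<in> bdry" "r > 0"
  obtains z where "z \<in> inside bdry" "dist z p < r"
proof -
  have "p \<in> closure (inside bdry)" using assms(1) bdry_subset_closure_inside by blast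
  then show ?thesis using assms(2) that unfolding closure_approachable by blast
qed

lemma outside_point_near_bdry:
  assumes "p \<in> bdry" "r > 0"
  obtains z where "z \<in> outside bdry" "dist z p < r"
proof -
  have "p \<in> closure (outside bdry)" using assms(1) bdry_subset_closure_outside by blast
  then show ?thesis using assms(2) that unfolding closure_approachable by blast
qed

end

section \<open>The two sides of a vertical edge\<close>

definition outside_beside :: "pt list \<Rightarrow> real \<Rightarrow> pt \<Rightarrow> bool" where
  "outside_beside vs \<sigma> p \<longleftrightarrow> (\<exists>e>0. \<forall>t. 0 < t \<and> t < e \<longrightarrow> p + (\<sigma> * t, 0) \<notin> poly_region vs)"

definition right_outside :: "pt list \<Rightarrow> nat \<Rightarrow> bool" where
  "right_outside vs i \<longleftrightarrow>
     (\<forall>p\<in>open_segment (vtx vs i) (vtx vs (Suc i)). \<exists>e>0. \<forall>t. 0 < t \<and> t < e \<longrightarrow>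
        p + (t, 0) \<notin> poly_region vs)"

lemma left_outside_iff_outside_beside:
  "left_outside vs i \<longleftrightarrow> (\<forall>p\<in>open_segment (vtx vs i) (vtx vs (Suc i)). outside_beside vs (-1) p)"
proof -
  have eq: "p + (- t, 0) = p - (t, 0)" for p :: pt and t :: real by (simp add: prod_eq_iff)
  show ?thesis unfolding left_outside_def outside_beside_def by (simp add: eq)
qed

lemma right_outside_iff_outside_beside:
  "right_outside vs i \<longleftrightarrow> (\<forall>p\<in>open_segment (vtx vs i) (vtx vs (Suc i)). outside_beside vs 1 p)"
  unfolding right_outside_def outside_beside_def by simp

definition side_box :: "real \<Rightarrow> real \<Rightarrow> real \<Rightarrow> real \<Rightarrow> real \<Rightarrow> pt set" where
  "side_box a \<delta> \<sigma> c d = {min a (a + \<sigma> * \<delta>)<..<max a (a + \<sigma> * \<delta>)} \<times> {c..d}"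

lemma connected_side_box: "connected (side_box a \<delta> \<sigma> c d)"
  unfolding side_box_def
  by (intro convex_connected convex_Times) (simp_all add: convex_real_interval)

lemma mem_side_box_iff:
  assumes "\<sigma> = 1 \<or> \<sigma> = -1" "\<delta> > 0"
  shows "(x, y) \<in> side_box a \<delta> \<sigma> c d \<longleftrightarrow> 0 < \<sigma> * (x - a) \<and> \<sigma> * (x - a) < \<delta> \<and> c \<le> y \<and> y \<le> d"
  using assms by (auto simp: side_box_def)

lemma side_boxes_cover:
  assumes "\<delta> > 0" "\<bar>x - a\<bar> < \<delta>" "x \<noteq> a" "c \<le> y" "y \<le> d"
  shows "(x, y) \<in> side_box a \<delta> (-1) c d \<or> (x, y) \<in> side_box a \<delta> 1 c d"
  using assms by (auto simp: side_box_def)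

context orth_polygon
begin

lemma bdry_near_compact:
  assumes "compact K" "\<forall>j<length vs. K \<inter> edge j \<noteq> {} \<longrightarrow> j \<in> J"
  shows "\<exists>\<delta>>0. \<forall>z\<in>bdry. \<forall>k\<in>K. dist z k < \<delta> \<longrightarrow> (\<exists>j\<in>J. j < length vs \<and> z \<in> edge j)"
proof -
  define T where "T = (\<Union>j\<in>{j. j < length vs \<and> j \<notin> J}. edge j)"
  have "closed T" unfolding T_def edge_eq by (intro closed_UN) auto
  moreover have "K \<inter> T = {}" using assms(2) unfolding T_def by auto
  ultimately obtain \<delta> where \<delta>: "\<delta> > 0" "\<forall>x\<in>K. \<forall>y\<in>T. \<delta> \<le> dist x y"
    using separate_compact_closed[OF assms(1)] by blast
  have "\<exists>j\<in>J. j < length vs \<and> z \<in> edge j" if "z \<in> bdry" "k \<in> K" "dist z k < \<delta>" for z k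
  proof -
    obtain j where j: "j < length vs" "z \<in> edge j" using \<open>z \<in> bdry\<close> unfolding bdry_eq by auto
    have "z \<notin> T" using \<delta> that by (metis dist_commute not_le)
    then show ?thesis using j unfolding T_def by auto
  qed
  then show ?thesis using \<delta>(1) by blast
qed

lemma vertical_edge_clear_strip:
  assumes i: "v i = (a, y1)" "v (Suc i) = (a, y2)" and cd: "min y1 y2 < c" "c \<le> d" "d < max y1 y2"
  shows "\<exists>\<delta>>0. \<forall>x y. \<bar>x - a\<bar> < \<delta> \<longrightarrow> c \<le> y \<longrightarrow> y \<le> d \<longrightarrow> x \<noteq> a \<longrightarrow> (x, y) \<notin> bdry"
proof -
  define K where "K = closed_segment (a, c) (a, d)"
  have K: "K = {p. fst p = a \<and> c \<le> snd p \<and> snd p \<le> d}"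
    using cd(2) by (simp add: K_def closed_segment_vertical in_closed_segment_real_iff)
  have K_edge: "K \<subseteq> edge i"
    using cd by (auto simp: K edge_vertical[OF i])
  have ends: "v i \<notin> K" "v (Suc i) \<notin> K"
    unfolding i K using cd by (auto simp: min_def max_def split: if_splits)
  have "j \<in> {i mod length vs}" if "j < length vs" "K \<inter> edge j \<noteq> {}" for j
  proof (rule ccontr)
    assume "j \<notin> {i mod length vs}"
    then have "edge i \<inter> edge j \<subseteq> {v i, v (Suc i)}"
      using edge_Int_edge[of i j] that(1) by (auto split: if_splits)
    then show False using that(2) K_edge ends by blast
  qed
  then obtain \<delta> where \<delta>: "\<delta> > 0"
    "\<forall>z\<in>bdry. \<forall>k\<in>K. dist z k < \<delta> \<longrightarrow> (\<exists>j\<in>{i mod length vs}. j < length vs \<and> z \<in> edge j)"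
    using bdry_near_compact[of K "{i mod length vs}"] by (auto simp: K_def)
  have "(x, y) \<notin> bdry" if "\<bar>x - a\<bar> < \<delta>" "c \<le> y" "y \<le> d" "x \<noteq> a" for x y
  proof
    assume "(x, y) \<in> bdry"
    moreover have "(a, y) \<in> K" "dist (x, y) (a, y) < \<delta>"
      using K that by (auto simp: dist_Pair_Pair dist_real_def)
    ultimately have "(x, y) \<in> edge i" using \<delta>(2) by auto
    then show False using edge_vertical[OF i] that(4) by auto
  qed
  then show ?thesis using \<delta>(1) by blast
qed

lemma vertical_edge_clear_box:
  assumes i: "v i = (a, y1)" "v (Suc i) = (a, y2)" and yp: "min y1 y2 < yp" "yp < max y1 y2"
  obtains \<delta> \<eta> where "\<delta> > 0" "\<eta> > 0" "min y1 y2 < yp - \<eta>" "yp + \<eta> < max y1 y2"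
    "\<forall>x y. \<bar>x - a\<bar> < \<delta> \<longrightarrow> yp - \<eta> \<le> y \<longrightarrow> y \<le> yp + \<eta> \<longrightarrow> x \<noteq> a \<longrightarrow> (x, y) \<notin> bdry"
proof -
  define \<eta> where "\<eta> = min (yp - min y1 y2) (max y1 y2 - yp) / 2"
  have "min (yp - min y1 y2) (max y1 y2 - yp) \<le> yp - min y1 y2"
    "min (yp - min y1 y2) (max y1 y2 - yp) \<le> max y1 y2 - yp"
    "min (yp - min y1 y2) (max y1 y2 - yp) > 0" using yp by auto
  then have \<eta>: "\<eta> > 0" "min y1 y2 < yp - \<eta>" "yp + \<eta> < max y1 y2"
    unfolding \<eta>_def by linarith+
  then show ?thesis
    using vertical_edge_clear_strip[OF i \<eta>(2) _ \<eta>(3)] that by auto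
qed

lemma side_box_Int_bdry:
  assumes "\<forall>x y. \<bar>x - a\<bar> < \<delta> \<longrightarrow> c \<le> y \<longrightarrow> y \<le> d \<longrightarrow> x \<noteq> a \<longrightarrow> (x, y) \<notin> bdry"
    and "\<sigma> = 1 \<or> \<sigma> = -1" "\<delta> > 0"
  shows "side_box a \<delta> \<sigma> c d \<inter> bdry = {}"
proof -
  have "(x, y) \<notin> bdry" if "(x, y) \<in> side_box a \<delta> \<sigma> c d" for x y
  proof -
    have "0 < \<sigma> * (x - a)" "\<sigma> * (x - a) < \<delta>" "c \<le> y" "y \<le> d"
      using that mem_side_box_iff[OF assms(2,3)] by auto
    then show ?thesis using assms(1,2) by auto
  qed
  then show ?thesis by auto
qed

lemma outside_beside_iff:
  assumes clear: "\<forall>x. x \<noteq> a \<and> \<bar>x - a\<bar> < \<delta> \<longrightarrow> (x, y) \<notin> bdry" and \<sigma>: "\<sigma> = 1 \<or> \<sigma> = -1"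
    and s: "0 < s" "s < \<delta>"
  shows "outside_beside vs \<sigma> (a, y) \<longleftrightarrow> (a + \<sigma> * s, y) \<notin> region"
proof -
  define L where "L = (\<lambda>t. (a + \<sigma> * t, y)) ` {0<..<\<delta>}"
  have "connected L" unfolding L_def
    by (intro connected_continuous_image continuous_intros) auto
  moreover have "L \<inter> bdry = {}" unfolding L_def using clear \<sigma> by auto
  moreover have L: "(a + \<sigma> * t, y) \<in> L" if "0 < t" "t < \<delta>" for t
    unfolding L_def using that by auto
  ultimately have same: "(a + \<sigma> * t, y) \<in> region \<longleftrightarrow> (a + \<sigma> * s, y) \<in> region"
    if "0 < t" "t < \<delta>" for t
    using region_iff_on_connected L[OF that] L[OF s] by blast
  show ?thesis
  proof
    assume "outside_beside vs \<sigma> (a, y)"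
    then obtain e where e: "e > 0" "\<forall>t. 0 < t \<and> t < e \<longrightarrow> (a + \<sigma> * t, y) \<notin> region"
      unfolding outside_beside_def by auto
    define t where "t = min e \<delta> / 2"
    have t: "0 < t" "t < e" "t < \<delta>" using e(1) s by (auto simp: t_def)
    then have "(a + \<sigma> * t, y) \<notin> region" using e(2) by blast
    then show "(a + \<sigma> * s, y) \<notin> region" using same[OF t(1,3)] by blast
  next
    assume "(a + \<sigma> * s, y) \<notin> region"
    then have "(a, y) + (\<sigma> * t, 0) \<notin> region" if "0 < t \<and> t < \<delta>" for t
      using same[of t] that by simp
    then show "outside_beside vs \<sigma> (a, y)"
      unfolding outside_beside_def using s by (intro exI[of _ \<delta>]) auto
  qed
qed

text \<open>Both sides of the edge near (a, yp) are clear of the boundary, while (a, yp) is a limit of inside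
  points and of outside points; so exactly one side belongs to the region.\<close>
lemma sides_of_vertical_edge_differ:
  assumes i: "v i = (a, y1)" "v (Suc i) = (a, y2)"
    and \<eta>: "\<eta> > 0" "min y1 y2 < yp - \<eta>" "yp + \<eta> < max y1 y2"
    and \<delta>: "\<delta> > 0" "\<forall>x y. \<bar>x - a\<bar> < \<delta> \<longrightarrow> yp - \<eta> \<le> y \<longrightarrow> y \<le> yp + \<eta> \<longrightarrow> x \<noteq> a \<longrightarrow> (x, y) \<notin> bdry"
    and s: "0 < s" "s < \<delta>" "s < \<eta>"
  shows "(a - s, yp) \<in> region \<longleftrightarrow> (a + s, yp) \<notin> region"
proof -
  define L where "L = side_box a \<delta> (-1) (yp - \<eta>) (yp + \<eta>)"
  define R where "R = side_box a \<delta> 1 (yp - \<eta>) (yp + \<eta>)"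
  have L_iff: "p \<in> region \<longleftrightarrow> q \<in> region" if "p \<in> L" "q \<in> L" for p q
    using region_iff_on_connected[OF _ _ that] side_box_Int_bdry[OF \<delta>(2) _ \<delta>(1)]
    by (simp add: L_def connected_side_box)
  have R_iff: "p \<in> region \<longleftrightarrow> q \<in> region" if "p \<in> R" "q \<in> R" for p q
    using region_iff_on_connected[OF _ _ that] side_box_Int_bdry[OF \<delta>(2) _ \<delta>(1)]
    by (simp add: R_def connected_side_box)
  have test: "(a - s, yp) \<in> L" "(a + s, yp) \<in> R"
    using s \<eta>(1) by (simp_all add: L_def R_def mem_side_box_iff[OF _ \<delta>(1)])
  have near: "z \<in> L \<or> z \<in> R" if "z \<notin> bdry" "dist z (a, yp) < min \<delta> \<eta>" for z
  proof -
    obtain x y where xy: "z = (x, y)" by (cases z)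
    have "\<bar>x - a\<bar> < \<delta>" "\<bar>y - yp\<bar> < \<eta>"
      using that(2) abs_fst_diff_le_dist[of z "(a, yp)"] abs_snd_diff_le_dist[of z "(a, yp)"] xy
      by auto
    moreover have "x \<noteq> a"
    proof
      assume "x = a"
      then have "z \<in> edge i" using \<open>\<bar>y - yp\<bar> < \<eta>\<close> \<eta> xy edge_vertical[OF i] by auto
      then show False using that(1) edge_subset_bdry by blast
    qed
    ultimately show ?thesis
      unfolding L_def R_def xy using side_boxes_cover[of \<delta> x a "yp - \<eta>" y "yp + \<eta>"] by auto
  qed
  have p: "(a, yp) \<in> bdry" using edge_vertical[OF i] edge_subset_bdry[of i] \<eta> by auto
  have "min \<delta> \<eta> > 0" using \<delta> \<eta> by simp
  obtain z where z: "z \<in> inside bdry" "dist z (a, yp) < min \<delta> \<eta>"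
    using inside_point_near_bdry[OF p \<open>min \<delta> \<eta> > 0\<close>] .
  obtain z' where z': "z' \<in> outside bdry" "dist z' (a, yp) < min \<delta> \<eta>"
    using outside_point_near_bdry[OF p \<open>min \<delta> \<eta> > 0\<close>] .
  have "z \<notin> bdry" "z \<in> region" "z' \<notin> bdry" "z' \<notin> region"
    using z(1) z'(1) inside_subset_region inside_no_overlap[of bdry] outside_no_overlap[of bdry]
    unfolding region_eq_compl_outside by blast+
  moreover have "z \<in> L \<or> z \<in> R" "z' \<in> L \<or> z' \<in> R"
    using near z(2) z'(2) \<open>z \<notin> bdry\<close> \<open>z' \<notin> bdry\<close> by blast+
  ultimately show ?thesis
    using L_iff[OF _ test(1)] R_iff[OF _ test(2)] by blast
qed

lemma outside_beside_left_iff_not_right: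
  assumes i: "v i = (a, y1)" "v (Suc i) = (a, y2)" and yp: "min y1 y2 < yp" "yp < max y1 y2"
  shows "outside_beside vs (-1) (a, yp) \<longleftrightarrow> \<not> outside_beside vs 1 (a, yp)"
proof -
  obtain \<delta> \<eta> where \<delta>\<eta>: "\<delta> > 0" "\<eta> > 0" "min y1 y2 < yp - \<eta>" "yp + \<eta> < max y1 y2"
    "\<forall>x y. \<bar>x - a\<bar> < \<delta> \<longrightarrow> yp - \<eta> \<le> y \<longrightarrow> y \<le> yp + \<eta> \<longrightarrow> x \<noteq> a \<longrightarrow> (x, y) \<notin> bdry"
    using vertical_edge_clear_box[OF i yp] by blast
  define s where "s = min \<delta> \<eta> / 2"
  have s: "0 < s" "s < \<delta>" "s < \<eta>" using \<delta>\<eta> by (auto simp: s_def)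
  have clear: "\<forall>x. x \<noteq> a \<and> \<bar>x - a\<bar> < \<delta> \<longrightarrow> (x, yp) \<notin> bdry" using \<delta>\<eta> by auto
  show ?thesis
    using outside_beside_iff[OF clear _ s(1,2), of "-1"] outside_beside_iff[OF clear _ s(1,2), of 1]
      sides_of_vertical_edge_differ[OF i \<delta>\<eta>(2,3,4,1,5) s]
    by simp
qed

lemma outside_beside_along_edge:
  assumes i: "v i = (a, y1)" "v (Suc i) = (a, y2)"
    and yp: "min y1 y2 < yp" "yp < max y1 y2" and yq: "min y1 y2 < yq" "yq < max y1 y2"
    and \<sigma>: "\<sigma> = 1 \<or> \<sigma> = -1"
  shows "outside_beside vs \<sigma> (a, yp) \<longleftrightarrow> outside_beside vs \<sigma> (a, yq)"
proof -
  have "min y1 y2 < min yp yq" "min yp yq \<le> max yp yq" "max yp yq < max y1 y2" using yp yq by auto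
  from vertical_edge_clear_strip[OF i this] obtain \<delta> where \<delta>: "\<delta> > 0"
    "\<forall>x y. \<bar>x - a\<bar> < \<delta> \<longrightarrow> min yp yq \<le> y \<longrightarrow> y \<le> max yp yq \<longrightarrow> x \<noteq> a \<longrightarrow> (x, y) \<notin> bdry"
    by blast
  define S where "S = side_box a \<delta> \<sigma> (min yp yq) (max yp yq)"
  have S: "connected S" "S \<inter> bdry = {}"
    unfolding S_def using connected_side_box side_box_Int_bdry[OF \<delta>(2) \<sigma> \<delta>(1)] by auto
  have "(a + \<sigma> * (\<delta> / 2), yp) \<in> S" "(a + \<sigma> * (\<delta> / 2), yq) \<in> S"
    unfolding S_def using mem_side_box_iff[OF \<sigma> \<delta>(1)] \<delta>(1) \<sigma> by auto
  then have same: "(a + \<sigma> * (\<delta> / 2), yp) \<in> region \<longleftrightarrow> (a + \<sigma> * (\<delta> / 2), yq) \<in> region"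
    by (rule region_iff_on_connected[OF S])
  have "\<forall>x. x \<noteq> a \<and> \<bar>x - a\<bar> < \<delta> \<longrightarrow> (x, yp) \<notin> bdry"
    "\<forall>x. x \<noteq> a \<and> \<bar>x - a\<bar> < \<delta> \<longrightarrow> (x, yq) \<notin> bdry"
    using \<delta> by auto
  then show ?thesis
    using outside_beside_iff[OF _ \<sigma>, of a \<delta> _ "\<delta> / 2"] same \<delta>(1) by simp
qed

lemma outside_beside_open_edge_iff:
  assumes i: "v i = (a, y1)" "v (Suc i) = (a, y2)" "y1 \<noteq> y2" and \<sigma>: "\<sigma> = 1 \<or> \<sigma> = -1"
  shows "(\<forall>p\<in>open_segment (v i) (v (Suc i)). outside_beside vs \<sigma> p) \<longleftrightarrow>
         outside_beside vs \<sigma> (a, (y1 + y2) / 2)"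
proof -
  have mid: "min y1 y2 < (y1 + y2) / 2" "(y1 + y2) / 2 < max y1 y2" using i(3) by auto
  have "(\<forall>p\<in>open_segment (v i) (v (Suc i)). outside_beside vs \<sigma> p) \<longleftrightarrow>
        (\<forall>y. min y1 y2 < y \<and> y < max y1 y2 \<longrightarrow> outside_beside vs \<sigma> (a, y))"
    by (auto simp: open_edge_vertical[OF i(1,2)])
  then show ?thesis using outside_beside_along_edge[OF i(1,2) _ _ mid \<sigma>] mid by blast
qed

lemma not_left_outside_iff_right_outside:
  assumes "vertical_edge vs i"
  shows "\<not> left_outside vs i \<longleftrightarrow> right_outside vs i"
proof -
  obtain a y1 y2 where i: "v i = (a, y1)" "v (Suc i) = (a, y2)" "y1 \<noteq> y2"
    using vertical_edgeE[OF assms] by blast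
  have "min y1 y2 < (y1 + y2) / 2" "(y1 + y2) / 2 < max y1 y2" using i(3) by auto
  then show ?thesis
    unfolding left_outside_iff_outside_beside right_outside_iff_outside_beside
    using outside_beside_open_edge_iff[OF i] outside_beside_left_iff_not_right[OF i(1,2)] by simp
qed

end

section \<open>Corners\<close>

context orth_polygon
begin

lemma bdry_near_vertex:
  "\<exists>r>0. \<forall>z\<in>bdry. dist z (v j) < r \<longrightarrow>
      z \<in> closed_segment (v (j + length vs - 1)) (v j) \<or> z \<in> closed_segment (v j) (v (Suc j))"
proof -
  have "\<forall>k<length vs. {v j} \<inter> edge k \<noteq> {} \<longrightarrow> k \<in> {j mod length vs, (j + length vs - 1) mod length vs}"
  proof (intro allI impI)
    fix k assume k: "k < length vs" "{v j} \<inter> edge k \<noteq> {}"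
    show "k \<in> {j mod length vs, (j + length vs - 1) mod length vs}"
    proof (rule ccontr)
      assume k_ne: "k \<notin> {j mod length vs, (j + length vs - 1) mod length vs}"
      then have "v j \<in> edge j \<inter> edge k" "j mod length vs \<noteq> k mod length vs"
        using k by (auto simp: edge_eq)
      moreover have "Suc k mod length vs \<noteq> j mod length vs"
        using k_ne eq_pred_mod_if_Suc_mod_eq[OF k(1)] by auto
      ultimately show False
        using edge_Int_edge[of j k] v_Suc_neq[of j] by (auto split: if_splits)
    qed
  qed
  from bdry_near_compact[OF compact_sing this] obtain r where r: "r > 0" "\<forall>z\<in>bdry. dist z (v j) < r \<longrightarrow>
      (\<exists>i\<in>{j mod length vs, (j + length vs - 1) mod length vs}. i < length vs \<and> z \<in> edge i)"
    by blast
  then show ?thesis by (auto simp: edge_eq)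
qed

definition corner :: "nat \<Rightarrow> real \<Rightarrow> real \<Rightarrow> real \<Rightarrow> real \<Rightarrow> bool" where
  "corner j a b \<alpha> \<beta> \<longleftrightarrow> v j = (a, b) \<and> \<alpha> \<noteq> 0 \<and> \<beta> \<noteq> 0 \<and>
     {v (j + length vs - 1), v (Suc j)} = {(a, b + \<alpha>), (a + \<beta>, b)}"

lemma corner_exists: "\<exists>a b \<alpha> \<beta>. corner j a b \<alpha> \<beta>"
proof -
  obtain a b where ab: "v j = (a, b)" by (cases "v j")
  obtain u1 u2 where u: "v (j + length vs - 1) = (u1, u2)" by (cases "v (j + length vs - 1)")
  obtain w1 w2 where w: "v (Suc j) = (w1, w2)" by (cases "v (Suc j)")
  have neq: "(u1, u2) \<noteq> (a, b)" "(w1, w2) \<noteq> (a, b)"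
    using v_Suc_neq[of "j + length vs - 1"] v_Suc_neq[of j] u w ab by auto
  note prev = vertical_pred_iff_horizontal[of j]
  show ?thesis
  proof (cases "vertical_edge vs j")
    case True
    then have "horizontal_edge vs (j + length vs - 1)"
      using prev vertical_or_horizontal not_vertical_and_horizontal by blast
    then have "u2 = b" "w1 = a"
      using True u w ab by (auto simp: vertical_edge_def horizontal_edge_def)
    then have "corner j a b (w2 - b) (u1 - a)" unfolding corner_def using ab u w neq by auto
    then show ?thesis by blast
  next
    case False
    then have "horizontal_edge vs j" "vertical_edge vs (j + length vs - 1)"
      using prev vertical_or_horizontal by blast+
    then have "u1 = a" "w2 = b"
      using u w ab by (auto simp: vertical_edge_def horizontal_edge_def)
    then have "corner j a b (u2 - b) (w1 - a)" unfolding corner_def using ab u w neq by auto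
    then show ?thesis by blast
  qed
qed

lemma corner_v: "corner j a b \<alpha> \<beta> \<Longrightarrow> v j = (a, b)"
  and corner_nonzero: "corner j a b \<alpha> \<beta> \<Longrightarrow> \<alpha> \<noteq> 0" "corner j a b \<alpha> \<beta> \<Longrightarrow> \<beta> \<noteq> 0"
  by (simp_all add: corner_def)

lemma corner_arms_subset_bdry:
  assumes "corner j a b \<alpha> \<beta>"
  shows "closed_segment (a, b) (a, b + \<alpha>) \<subseteq> bdry" "closed_segment (a, b) (a + \<beta>, b) \<subseteq> bdry"
proof -
  have "closed_segment (v (j + length vs - 1)) (v j) \<subseteq> bdry" "closed_segment (v j) (v (Suc j)) \<subseteq> bdry"
    using edge_subset_bdry[of "j + length vs - 1"] edge_subset_bdry[of j] by (simp_all add: edge_eq)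
  then show "closed_segment (a, b) (a, b + \<alpha>) \<subseteq> bdry" "closed_segment (a, b) (a + \<beta>, b) \<subseteq> bdry"
    using assms unfolding corner_def doubleton_eq_iff by (auto simp: closed_segment_commute)
qed

definition clear_radius :: "real \<Rightarrow> real \<Rightarrow> real \<Rightarrow> real \<Rightarrow> real \<Rightarrow> bool" where
  "clear_radius a b \<alpha> \<beta> r \<longleftrightarrow> r > 0 \<and> (\<forall>z. dist z (a, b) < r \<longrightarrow>
     (z \<in> bdry \<longleftrightarrow> (fst z = a \<and> 0 \<le> \<alpha> * (snd z - b)) \<or> (snd z = b \<and> 0 \<le> \<beta> * (fst z - a))))"

lemma clear_radius_pos: "clear_radius a b \<alpha> \<beta> r \<Longrightarrow> r > 0"
  by (simp add: clear_radius_def)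

lemma mem_bdry_iff_clear_radius:
  "clear_radius a b \<alpha> \<beta> r \<Longrightarrow> dist z (a, b) < r \<Longrightarrow>
     z \<in> bdry \<longleftrightarrow> (fst z = a \<and> 0 \<le> \<alpha> * (snd z - b)) \<or> (snd z = b \<and> 0 \<le> \<beta> * (fst z - a))"
  unfolding clear_radius_def by blast

lemma clear_radius_exists:
  assumes c: "corner j a b \<alpha> \<beta>"
  shows "\<exists>r. clear_radius a b \<alpha> \<beta> r"
proof -
  obtain r0 where r0: "r0 > 0" "\<forall>z\<in>bdry. dist z (v j) < r0 \<longrightarrow>
      z \<in> closed_segment (v (j + length vs - 1)) (v j) \<or> z \<in> closed_segment (v j) (v (Suc j))"
    using bdry_near_vertex by blast
  have arms: "z \<in> closed_segment (v (j + length vs - 1)) (v j) \<or> z \<in> closed_segment (v j) (v (Suc j)) \<longleftrightarrow>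
      z \<in> closed_segment (a, b) (a, b + \<alpha>) \<or> z \<in> closed_segment (a, b) (a + \<beta>, b)" for z
    using c unfolding corner_def doubleton_eq_iff by (auto simp: closed_segment_commute)
  define r where "r = min r0 (min \<bar>\<alpha>\<bar> \<bar>\<beta>\<bar>)"
  have r: "r > 0" "r \<le> r0" "r \<le> \<bar>\<alpha>\<bar>" "r \<le> \<bar>\<beta>\<bar>"
    using r0 corner_nonzero[OF c] by (auto simp: r_def)
  have "z \<in> bdry \<longleftrightarrow> (fst z = a \<and> 0 \<le> \<alpha> * (snd z - b)) \<or> (snd z = b \<and> 0 \<le> \<beta> * (fst z - a))"
    if "dist z (a, b) < r" for z
  proof -
    have "\<bar>fst z - a\<bar> \<le> \<bar>\<beta>\<bar>" "\<bar>snd z - b\<bar> \<le> \<bar>\<alpha>\<bar>"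
      using abs_fst_diff_le_dist[of z "(a, b)"] abs_snd_diff_le_dist[of z "(a, b)"] that r by auto
    then have "z \<in> closed_segment (a, b) (a, b + \<alpha>) \<or> z \<in> closed_segment (a, b) (a + \<beta>, b) \<longleftrightarrow>
        (fst z = a \<and> 0 \<le> \<alpha> * (snd z - b)) \<or> (snd z = b \<and> 0 \<le> \<beta> * (fst z - a))"
      using in_vertical_arm_iff[OF corner_nonzero(1)[OF c]] in_horizontal_arm_iff[OF corner_nonzero(2)[OF c]]
      by blast
    moreover have "z \<in> bdry \<longleftrightarrow> z \<in> closed_segment (a, b) (a, b + \<alpha>) \<or> z \<in> closed_segment (a, b) (a + \<beta>, b)"
      using r0(2) arms corner_arms_subset_bdry[OF c] corner_v[OF c] that r(2) by auto
    ultimately show ?thesis by blast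
  qed
  then show ?thesis using r(1) unfolding clear_radius_def by blast
qed

lemma convex_vertex_iff_quadrant:
  assumes c: "corner j a b \<alpha> \<beta>"
  shows "convex_vertex vs j \<longleftrightarrow> (\<exists>e>0. region \<inter> ball (a, b) e = quadrant (a, b) \<alpha> \<beta> \<inter> ball (a, b) e)"
proof -
  let ?u = "v (j + length vs - 1)" and ?w = "v (Suc j)"
  have ab: "v j = (a, b)" and \<alpha>\<beta>: "\<alpha> \<noteq> 0" "\<beta> \<noteq> 0"
    using c by (simp_all add: corner_def)
  consider "?u = (a, b) + (0, \<alpha>)" "?w = (a, b) + (\<beta>, 0)" | "?u = (a, b) + (\<beta>, 0)" "?w = (a, b) + (0, \<alpha>)"
    using c unfolding corner_def doubleton_eq_iff by auto
  then have "(?u - (a, b)) \<bullet> (?w - (a, b)) = 0 \<and>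
      {(a, b) + s *\<^sub>R (?u - (a, b)) + t *\<^sub>R (?w - (a, b)) | s t. 0 \<le> s \<and> 0 \<le> t} = quadrant (a, b) \<alpha> \<beta>"
  proof cases
    case 1
    then show ?thesis using cone_eq_quadrant[OF 1 \<alpha>\<beta>] by simp
  next
    case 2
    have "{(a, b) + s *\<^sub>R (?u - (a, b)) + t *\<^sub>R (?w - (a, b)) | s t. 0 \<le> s \<and> 0 \<le> t} =
        quadrant (a, b) \<alpha> \<beta>"
      unfolding cone_commute[where u = ?u and w = ?w] by (rule cone_eq_quadrant[OF 2(2,1) \<alpha>\<beta>])
    then show ?thesis using 2 by simp
  qed
  then show ?thesis unfolding convex_vertex_def Let_def ab by simp
qed

lemma region_on_arm_side_if_leftmost:
  assumes r: "clear_radius a b \<alpha> \<beta> r" and \<alpha>: "\<alpha> \<noteq> 0" and left: "\<forall>z\<in>region. a \<le> fst z"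
    and z: "z \<in> region" "dist z (a, b) < r"
  shows "0 \<le> \<alpha> * (snd z - b)"
proof -
  define H where "H = {z. \<alpha> * (snd z - b) < 0} \<inter> ball (a, b) r"
  have "connected H" unfolding H_def by (intro convex_connected convex_Int convex_snd_lt convex_ball)
  moreover have "H \<inter> bdry = {}"
    using mem_bdry_iff_clear_radius[OF r] by (auto simp: H_def dist_commute)
  moreover have "r > 0" using clear_radius_pos[OF r] .
  define y where "y = (if \<alpha> > 0 then b - r / 4 else b + r / 4)"
  have y: "\<alpha> * (y - b) < 0" "\<bar>y - b\<bar> = r / 4"
    using \<alpha> \<open>r > 0\<close> by (auto simp: y_def mult_pos_neg mult_neg_pos)
  have "dist (a - r / 4, y) (a, b) \<le> \<bar>a - r / 4 - a\<bar> + \<bar>y - b\<bar>"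
    by (rule dist_Pair_le_sum_abs)
  then have "(a - r / 4, y) \<in> H" using \<open>r > 0\<close> y by (simp add: H_def dist_commute)
  moreover have "(a - r / 4, y) \<notin> region" using left \<open>r > 0\<close> by force
  ultimately have "z \<notin> H" using region_iff_on_connected z(1) by blast
  then show ?thesis using z(2) by (auto simp: H_def dist_commute)
qed

lemma quarter_disc_inside_if_leftmost:
  assumes r: "clear_radius a b \<alpha> \<beta> r" and \<alpha>: "\<alpha> \<noteq> 0" and "\<beta> > 0"
    and ab: "(a, b) \<in> bdry" and left: "\<forall>z\<in>region. a \<le> fst z"
  shows "{z. 0 < \<alpha> * (snd z - b)} \<inter> {z. 0 < \<beta> * (fst z - a)} \<inter> ball (a, b) r \<subseteq> region"
proof -
  define Q where "Q = {z. 0 < \<alpha> * (snd z - b)} \<inter> {z. 0 < \<beta> * (fst z - a)} \<inter> ball (a, b) r"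
  have "connected Q"
    unfolding Q_def by (intro convex_connected convex_Int convex_snd_gt convex_fst_gt convex_ball)
  moreover have "Q \<inter> bdry = {}"
    using mem_bdry_iff_clear_radius[OF r] by (auto simp: Q_def dist_commute)
  moreover obtain z where z: "z \<in> inside bdry" "dist z (a, b) < r"
    using inside_point_near_bdry[OF ab clear_radius_pos[OF r]] .
  moreover have z_reg: "z \<in> region" "z \<notin> bdry"
    using z(1) inside_subset_region inside_no_overlap by blast+
  moreover have "z \<in> Q"
  proof -
    have "a < fst z"
      using fst_gt_if_open_subset_halfplane[OF open_inside[OF closed_bdry] _ z(1)] left inside_subset_region
      by blast
    moreover have "snd z \<noteq> b"
      using mem_bdry_iff_clear_radius[OF r z(2)] z_reg(2) \<open>a < fst z\<close> \<open>\<beta> > 0\<close> by auto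
    then have "0 < \<alpha> * (snd z - b)"
      using region_on_arm_side_if_leftmost[OF r \<alpha> left z_reg(1) z(2)] \<alpha> by (simp add: order_le_less)
    ultimately show ?thesis using z(2) \<open>\<beta> > 0\<close> by (simp add: Q_def dist_commute)
  qed
  ultimately show ?thesis using region_iff_on_connected unfolding Q_def[symmetric] by blast
qed

lemma convex_vertex_if_leftmost:
  assumes leftmost: "\<forall>z\<in>region. fst (v j) \<le> fst z"
  shows "convex_vertex vs j"
proof -
  obtain a b \<alpha> \<beta> where c: "corner j a b \<alpha> \<beta>" using corner_exists by blast
  have ab: "v j = (a, b)" and \<alpha>: "\<alpha> \<noteq> 0" using c by (simp_all add: corner_def)
  have left: "\<forall>z\<in>region. a \<le> fst z" using leftmost ab by auto
  have "(a + \<beta>, b) \<in> bdry" using c v_in_bdry unfolding corner_def doubleton_eq_iff by metis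
  then have "\<beta> > 0" using left bdry_subset_region corner_nonzero(2)[OF c] by force
  obtain r where r: "clear_radius a b \<alpha> \<beta> r" using clear_radius_exists[OF c] by blast
  note Q_in = quarter_disc_inside_if_leftmost[OF r \<alpha> \<open>\<beta> > 0\<close> v_in_bdry[of j, unfolded ab] left]
  have "region \<inter> ball (a, b) r = quadrant (a, b) \<alpha> \<beta> \<inter> ball (a, b) r"
  proof (intro set_eqI iffI)
    fix z assume z: "z \<in> region \<inter> ball (a, b) r"
    then have "0 \<le> \<alpha> * (snd z - b)"
      using region_on_arm_side_if_leftmost[OF r \<alpha> left] by (simp add: dist_commute)
    moreover have "0 \<le> \<beta> * (fst z - a)" using left z \<open>\<beta> > 0\<close> by simp
    ultimately show "z \<in> quadrant (a, b) \<alpha> \<beta> \<inter> ball (a, b) r" using z by (simp add: quadrant_def)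
  next
    fix z assume z: "z \<in> quadrant (a, b) \<alpha> \<beta> \<inter> ball (a, b) r"
    show "z \<in> region \<inter> ball (a, b) r"
    proof (cases "fst z = a \<or> snd z = b")
      case True
      then have "(fst z = a \<and> 0 \<le> \<alpha> * (snd z - b)) \<or> (snd z = b \<and> 0 \<le> \<beta> * (fst z - a))"
        using z by (auto simp: quadrant_def)
      moreover have "dist z (a, b) < r" using z by (simp add: dist_commute)
      ultimately have "z \<in> bdry" using mem_bdry_iff_clear_radius[OF r] by blast
      then show ?thesis using z bdry_subset_region by blast
    next
      case False
      then have "0 < \<alpha> * (snd z - b)" "0 < \<beta> * (fst z - a)"
        using z \<alpha> \<open>\<beta> > 0\<close> by (simp_all add: quadrant_def less_le)
      then show ?thesis using z Q_in by blast
    qed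
  qed
  then show ?thesis using convex_vertex_iff_quadrant[OF c] clear_radius_pos[OF r] by blast
qed

end

section \<open>Left knobs\<close>

context orth_polygon
begin

lemma vertical_edge_at_vertex:
  "\<exists>k<length vs. vertical_edge vs k \<and> fst (v k) = fst (v j) \<and> fst (v (Suc k)) = fst (v j)"
proof (cases "vertical_edge vs j")
  case True
  then show ?thesis
    using length_pos by (intro exI[of _ "j mod length vs"]) (simp add: vertical_edge_def)
next
  case False
  then have "vertical_edge vs (j + length vs - 1)"
    using vertical_pred_iff_horizontal vertical_or_horizontal by blast
  then show ?thesis
    using length_pos
    by (intro exI[of _ "(j + length vs - 1) mod length vs"]) (simp add: vertical_edge_def)
qed

lemma knob_other_end:
  assumes "vertical_edge vs k" "j = k \<or> j = Suc k" and c: "corner j a b \<alpha> \<beta>"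
  shows "(if j = k then v (Suc k) else v k) = (a, b + \<alpha>)"
proof -
  define u where "u = (if j = k then v (Suc k) else v k)"
  have "u = v (Suc j) \<or> u = v (j + length vs - 1)"
    using assms(2) length_pos by (auto simp: u_def)
  then have "u \<in> {(a, b + \<alpha>), (a + \<beta>, b)}" using c unfolding corner_def by auto
  moreover have "fst u = a"
    using assms(1,2) corner_v[OF c] unfolding u_def vertical_edge_def by auto
  moreover have "u \<noteq> (a + \<beta>, b)"
  proof
    assume "u = (a + \<beta>, b)"
    then have "fst u = a + \<beta>" by simp
    then show False using \<open>fst u = a\<close> corner_nonzero(2)[OF c] by simp
  qed
  ultimately show ?thesis by (auto simp: u_def[symmetric])
qed

text \<open>At a convex end of a vertical edge whose left side is outside, the horizontal arm points to
  the right, since otherwise the quarter-plane of the corner would reach left of the edge.\<close>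
lemma left_outside_end_local:
  assumes k: "vertical_edge vs k" "left_outside vs k" and j: "j = k \<or> j = Suc k"
    and cv: "convex_vertex vs j" and c: "corner j a b \<alpha> \<beta>"
  shows "\<exists>e>0. \<forall>z\<in>region. dist z (a, b) < e \<longrightarrow> a \<le> fst z \<and> 0 \<le> \<alpha> * (snd z - b)"
proof -
  have ab: "v j = (a, b)" and \<alpha>: "\<alpha> \<noteq> 0" and \<beta>: "\<beta> \<noteq> 0" using c by (simp_all add: corner_def)
  have edge: "open_segment (v k) (v (Suc k)) = open_segment (a, b) (a, b + \<alpha>)"
    using knob_other_end[OF k(1) j c] ab j by (auto simp: open_segment_commute split: if_splits)
  obtain e where e: "e > 0" "region \<inter> ball (a, b) e = quadrant (a, b) \<alpha> \<beta> \<inter> ball (a, b) e"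
    using cv convex_vertex_iff_quadrant[OF c] by blast
  have "\<beta> > 0"
  proof (rule ccontr)
    assume "\<not> \<beta> > 0"
    then have "\<beta> < 0" using \<beta> by simp
    define s where "s = min (1 / 2) (e / (4 * \<bar>\<alpha>\<bar>))"
    have s: "0 < s" "s < 1" using e(1) \<alpha> by (auto simp: s_def)
    have "s * \<bar>\<alpha>\<bar> \<le> e / (4 * \<bar>\<alpha>\<bar>) * \<bar>\<alpha>\<bar>"
      by (rule mult_right_mono) (simp_all add: s_def)
    then have s_\<alpha>: "\<bar>s * \<alpha>\<bar> \<le> e / 4" using \<alpha> s(1) by (simp add: abs_mult)
    have "(a, b + s * \<alpha>) = (1 - s) *\<^sub>R (a, b) + s *\<^sub>R (a, b + \<alpha>)" by (simp add: algebra_simps)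
    then have "(a, b + s * \<alpha>) \<in> open_segment (v k) (v (Suc k))"
      unfolding edge in_segment(2) using s \<alpha> by auto
    then obtain e' where e': "e' > 0" "\<forall>t. 0 < t \<and> t < e' \<longrightarrow> (a, b + s * \<alpha>) - (t, 0) \<notin> region"
      using k(2) unfolding left_outside_def by blast
    define t where "t = min e' e / 2"
    have t: "0 < t" "t < e'" "t \<le> e / 2" using e' e by (auto simp: t_def)
    have "dist (a - t, b + s * \<alpha>) (a, b) \<le> \<bar>a - t - a\<bar> + \<bar>b + s * \<alpha> - b\<bar>"
      by (rule dist_Pair_le_sum_abs)
    then have "(a - t, b + s * \<alpha>) \<in> ball (a, b) e" using t s_\<alpha> by (simp add: dist_commute)
    moreover have "0 \<le> \<alpha> * (s * \<alpha>)"
      using s(1) by (metis mult.left_commute mult_nonneg_nonneg zero_le_square less_imp_le)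
    then have "(a - t, b + s * \<alpha>) \<in> quadrant (a, b) \<alpha> \<beta>"
      using t(1) \<open>\<beta> < 0\<close> by (simp add: quadrant_def mult_neg_pos less_imp_le)
    ultimately have "(a - t, b + s * \<alpha>) \<in> region" using e(2) by blast
    then show False using e' t by auto
  qed
  have "a \<le> fst z \<and> 0 \<le> \<alpha> * (snd z - b)" if "z \<in> region" "dist z (a, b) < e" for z
  proof -
    have "z \<in> region \<inter> ball (a, b) e" using that by (simp add: dist_commute)
    then have "z \<in> quadrant (a, b) \<alpha> \<beta>" using e(2) by blast
    then show ?thesis using \<open>\<beta> > 0\<close> by (simp add: quadrant_def zero_le_mult_iff)
  qed
  then show ?thesis using e(1) by blast
qed

lemma left_outside_interior_local:
  assumes k: "vertical_edge vs k" "left_outside vs k" and p: "p \<in> open_segment (v k) (v (Suc k))"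
  shows "\<exists>e>0. \<forall>z\<in>region. dist z p < e \<longrightarrow> fst p \<le> fst z"
proof -
  obtain a y1 y2 where i: "v k = (a, y1)" "v (Suc k) = (a, y2)" "y1 \<noteq> y2"
    using vertical_edgeE[OF k(1)] by blast
  obtain yp where p_eq: "p = (a, yp)" and yp: "min y1 y2 < yp" "yp < max y1 y2"
    using p open_edge_vertical[OF i(1,2)] by (cases p) auto
  obtain \<delta> \<eta> where \<delta>\<eta>: "\<delta> > 0" "\<eta> > 0" "min y1 y2 < yp - \<eta>" "yp + \<eta> < max y1 y2"
    and clear: "\<forall>x y. \<bar>x - a\<bar> < \<delta> \<longrightarrow> yp - \<eta> \<le> y \<longrightarrow> y \<le> yp + \<eta> \<longrightarrow> x \<noteq> a \<longrightarrow> (x, y) \<notin> bdry"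
    using vertical_edge_clear_box[OF i(1,2) yp] by blast
  define L where "L = side_box a \<delta> (-1) (yp - \<eta>) (yp + \<eta>)"
  have L: "connected L" "L \<inter> bdry = {}" "(a - \<delta> / 2, yp) \<in> L"
    unfolding L_def using connected_side_box side_box_Int_bdry[OF clear _ \<delta>\<eta>(1)] \<delta>\<eta>
    by (auto simp: mem_side_box_iff)
  have "outside_beside vs (-1) (a, yp)"
    using k(2) p p_eq by (simp add: left_outside_iff_outside_beside)
  then have "(a - \<delta> / 2, yp) \<notin> region"
    using outside_beside_iff[of a \<delta> yp "-1" "\<delta> / 2"] clear \<delta>\<eta> by auto
  then have L_out: "L \<inter> region = {}" using region_iff_on_connected[OF L(1,2) _ L(3)] by blast
  have "a \<le> fst z" if "z \<in> region" "dist z p < min \<delta> \<eta>" for z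
  proof (rule ccontr)
    assume "\<not> a \<le> fst z"
    moreover have "\<bar>fst z - a\<bar> < \<delta>" "\<bar>snd z - yp\<bar> < \<eta>"
      using that(2) abs_fst_diff_le_dist[of z p] abs_snd_diff_le_dist[of z p] p_eq by auto
    ultimately have "z \<in> L" using \<delta>\<eta>(1) by (cases z) (auto simp: L_def mem_side_box_iff)
    then show False using that(1) L_out by blast
  qed
  then show ?thesis using \<delta>\<eta> p_eq by (intro exI[of _ "min \<delta> \<eta>"]) auto
qed

lemma left_knob_local:
  assumes lk: "left_knob vs k" and y: "y \<in> edge k"
  shows "\<exists>e>0. \<forall>z\<in>region. dist z y < e \<longrightarrow> fst (v k) \<le> fst z"
proof -
  have k: "vertical_edge vs k" "left_outside vs k" "convex_vertex vs k" "convex_vertex vs (Suc k)"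
    using lk by (auto simp: left_knob_def knob_def)
  obtain a y1 y2 where i: "v k = (a, y1)" "v (Suc k) = (a, y2)"
    using vertical_edgeE[OF k(1)] by blast
  have "fst y = fst (v k)" using y edge_vertical[OF i] i by simp
  show ?thesis
  proof (cases "y \<in> open_segment (v k) (v (Suc k))")
    case True
    then show ?thesis using left_outside_interior_local[OF k(1,2) True] \<open>fst y = fst (v k)\<close> by simp
  next
    case False
    then obtain j where j: "j = k \<or> j = Suc k" "y = v j"
      using y by (auto simp: edge_eq open_segment_def)
    obtain a b \<alpha> \<beta> where c: "corner j a b \<alpha> \<beta>" using corner_exists by blast
    have "convex_vertex vs j" using j(1) k by auto
    from left_outside_end_local[OF k(1,2) j(1) this c] obtain e where
      "e > 0" "\<forall>z\<in>region. dist z (a, b) < e \<longrightarrow> a \<le> fst z" by blast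
    moreover have "y = (a, b)" "fst (v k) = a"
      using j corner_v[OF c] k(1) by (auto simp: vertical_edge_def)
    ultimately show ?thesis by auto
  qed
qed

lemma region_right_of_min_vertex: "\<forall>z\<in>region. Min (fst ` set vs) \<le> fst z"
proof -
  define m where "m = Min (fst ` set vs)"
  have "m \<le> fst (v i)" for i
    using length_pos unfolding m_def vtx_def by (intro Min_le) auto
  then have "edge i \<subseteq> {z. m \<le> fst z}" for i
    unfolding edge_eq by (intro closed_segment_subset convex_fst_ge) auto
  then have "bdry \<subseteq> {z. m \<le> fst z}" unfolding bdry_eq by blast
  then have "- {z. m \<le> fst z} \<subseteq> outside bdry"
    by (rule outside_subset_convex[OF convex_fst_ge])
  then show ?thesis unfolding m_def region_eq_compl_outside by blast
qed

lemma left_knob_exists: "\<exists>k<length vs. left_knob vs k"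
proof -
  define m where "m = Min (fst ` set vs)"
  have "m \<in> fst ` set vs" unfolding m_def using length_pos by (intro Min_in) auto
  then obtain j where "fst (v j) = m"
    unfolding vtx_def by (metis imageE in_set_conv_nth mod_less)
  then obtain k where k: "k < length vs" "vertical_edge vs k" "fst (v k) = m" "fst (v (Suc k)) = m"
    using vertical_edge_at_vertex by metis
  have leftmost: "m \<le> fst z" if "z \<in> region" for z
    using region_right_of_min_vertex that unfolding m_def by blast
  have "left_outside vs k"
    unfolding left_outside_def
  proof (intro ballI exI[of _ 1] conjI allI impI)
    fix p and t :: real assume "p \<in> open_segment (v k) (v (Suc k))" "0 < t \<and> t < 1"
    moreover have "fst p = m"
      using \<open>p \<in> open_segment (v k) (v (Suc k))\<close> k(2-4)
      by (auto simp: open_segment_def closed_segment_vertical elim!: vertical_edgeE)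
    ultimately show "p - (t, 0) \<notin> region" using leftmost[of "p - (t, 0)"] by auto
  qed simp
  moreover have "convex_vertex vs k" "convex_vertex vs (Suc k)"
    using convex_vertex_if_leftmost leftmost k(3,4) by simp_all
  ultimately show ?thesis using k(1,2) by (auto simp: left_knob_def knob_def)
qed

end

locale vertically_convex_polygon = orth_polygon +
  assumes connected_region: "connected (poly_region vs)"
    and vertical_slices: "\<forall>c. single_segment ({p. fst p = c} \<inter> poly_region vs)"
begin

lemma convex_vertical_slice: "convex ({p. fst p = c} \<inter> region)"
  using vertical_slices unfolding single_segment_def by (metis convex_empty convex_closed_segment)

text \<open>Near each end of a left knob the region lies on the side of the knob, so the convex vertical
  slice through the knob cannot extend beyond it.\<close>
lemma left_knob_slice:
  assumes lk: "left_knob vs k"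
  shows "{p. fst p = fst (v k)} \<inter> region \<subseteq> edge k"
proof
  fix z assume z: "z \<in> {p. fst p = fst (v k)} \<inter> region"
  define S where "S = {p. fst p = fst (v k)} \<inter> region"
  have k: "vertical_edge vs k" "left_outside vs k" "convex_vertex vs k" "convex_vertex vs (Suc k)"
    using lk by (auto simp: left_knob_def knob_def)
  obtain a y1 y2 where i: "v k = (a, y1)" "v (Suc k) = (a, y2)" "y1 \<noteq> y2"
    using vertical_edgeE[OF k(1)] by blast
  have end_bound: "0 \<le> (ob - b) * (snd z - b)"
    if j: "j = k \<or> j = Suc k" "v j = (a, b)" "(if j = k then v (Suc k) else v k) = (a, ob)" for j b ob
  proof -
    obtain a' b' \<alpha> \<beta> where c: "corner j a' b' \<alpha> \<beta>" using corner_exists by blast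
    have "a' = a" "b' = b" using corner_v[OF c] j(2) by simp_all
    then have \<alpha>: "\<alpha> = ob - b" using knob_other_end[OF k(1) j(1) c] j(3) by simp
    have "convex_vertex vs j" using j(1) k(3,4) by blast
    then obtain e where e: "e > 0" "\<forall>w\<in>region. dist w (a, b) < e \<longrightarrow> a \<le> fst w \<and> 0 \<le> \<alpha> * (snd w - b)"
      using left_outside_end_local[OF k(1,2) j(1) _ c] \<open>a' = a\<close> \<open>b' = b\<close> by blast
    have "linear (\<lambda>w :: pt. \<alpha> * snd w)" by (rule linearI) (simp_all add: algebra_simps)
    moreover have "(a, b) \<in> S" "z \<in> S"
      using j(1,2) v_in_bdry[of j] bdry_subset_region z i by (auto simp: S_def)
    moreover have "\<forall>w\<in>S. dist w (a, b) < e \<longrightarrow> 0 \<le> \<alpha> * snd (w - (a, b))"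
      using e(2) by (simp add: S_def)
    ultimately have "0 \<le> \<alpha> * snd (z - (a, b))"
      using convex_in_halfspace_if_near_point[OF convex_vertical_slice[of "fst (v k)", folded S_def]] e(1)
      by blast
    then show ?thesis using \<alpha> by simp
  qed
  have "0 \<le> (y2 - y1) * (snd z - y1)" "0 \<le> (y1 - y2) * (snd z - y2)"
    using end_bound[of k y1 y2] end_bound[of "Suc k" y2 y1] i by simp_all
  then have "min y1 y2 \<le> snd z \<and> snd z \<le> max y1 y2"
    using i(3) by (cases "y1 < y2") (auto simp: zero_le_mult_iff)
  then show "z \<in> edge k" using edge_vertical[OF i(1,2)] z i by simp
qed

text \<open>The part of the region left of a left knob would be separated from the rest: its closure
  meets the line of the knob only inside the slice, i.e. on the knob, where the region is locally
  to the right.\<close>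
lemma left_knob_leftmost:
  assumes lk: "left_knob vs k"
  shows "\<forall>z\<in>region. fst (v k) \<le> fst z"
proof (rule ccontr)
  assume "\<not> (\<forall>z\<in>region. fst (v k) \<le> fst z)"
  then obtain q where q: "q \<in> region" "fst q < fst (v k)" by force
  define a where "a = fst (v k)"
  define A where "A = region \<inter> {z. fst z < a}"
  have edge_far: "y \<notin> closure A" if y: "y \<in> edge k" for y
  proof
    assume "y \<in> closure A"
    obtain e where "e > 0" "\<forall>z\<in>region. dist z y < e \<longrightarrow> a \<le> fst z"
      using left_knob_local[OF lk y] unfolding a_def by blast
    with \<open>y \<in> closure A\<close> show False unfolding closure_approachable A_def by force
  qed
  have "closure A \<subseteq> {z. fst z \<le> a}"
    by (rule closure_minimal) (auto simp: A_def intro!: closed_Collect_le continuous_intros)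
  have "region \<subseteq> {z. fst z < a} \<union> - closure A"
  proof
    fix z assume z: "z \<in> region"
    show "z \<in> {z. fst z < a} \<union> - closure A"
    proof (rule ccontr)
      assume "z \<notin> {z. fst z < a} \<union> - closure A"
      then have "z \<in> closure A" "fst z = a" using \<open>closure A \<subseteq> {z. fst z \<le> a}\<close> by auto
      moreover have "z \<in> edge k" using left_knob_slice[OF lk] z \<open>fst z = a\<close> a_def by blast
      ultimately show False using edge_far by blast
    qed
  qed
  moreover have "{z. fst z < a} \<inter> - closure A \<inter> region = {}"
    using closure_subset[of A] by (auto simp: A_def)
  moreover have "open {z :: pt. fst z < a}"
    by (rule open_Collect_less) (auto intro: continuous_intros)
  ultimately have "{z. fst z < a} \<inter> region = {} \<or> - closure A \<inter> region = {}"
    using connectedD[OF connected_region _ open_Compl[OF closed_closure]] by blast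
  moreover have "q \<in> {z. fst z < a} \<inter> region" using q a_def by simp
  moreover have "v k \<in> - closure A \<inter> region"
    using edge_far[of "v k"] v_in_bdry bdry_subset_region by (auto simp: edge_eq)
  ultimately show False by blast
qed

lemma left_knob_unique:
  assumes "left_knob vs k1" "left_knob vs k2" "k1 < length vs" "k2 < length vs"
  shows "k1 = k2"
proof (rule ccontr)
  assume "k1 \<noteq> k2"
  then have ne: "k1 mod length vs \<noteq> k2 mod length vs" using assms(3,4) by simp
  have "fst (v k1) = fst (v k2)"
    using left_knob_leftmost[OF assms(1)] left_knob_leftmost[OF assms(2)] v_in_bdry bdry_subset_region
    by (meson order_antisym subsetD)
  moreover obtain a y1 y2 where i: "v k2 = (a, y1)" "v (Suc k2) = (a, y2)"
    using assms(2) vertical_edgeE unfolding left_knob_def by blast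
  ultimately have "edge k2 \<subseteq> {p. fst p = fst (v k1)} \<inter> region"
    using edge_vertical[OF i] edge_subset_bdry[of k2] bdry_subset_region by auto
  then have "v k2 \<in> edge k1 \<inter> edge k2" "v (Suc k2) \<in> edge k1 \<inter> edge k2"
    using left_knob_slice[OF assms(1)] by (auto simp: edge_eq)
  then have "v k2 = v (Suc k2)" using edge_Int_edge[OF ne] by (auto split: if_splits)
  then show False using v_Suc_neq[of k2] by simp
qed

lemma card_left_knobs: "card {i. i < length vs \<and> left_knob vs i} = 1"
proof -
  obtain k where "k < length vs" "left_knob vs k" using left_knob_exists by blast
  then have "{i. i < length vs \<and> left_knob vs i} = {k}" using left_knob_unique by blast
  then show ?thesis by simp
qed

end

section \<open>Rotating the polygon by a right angle\<close>

lemma inside_linear_image: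
  fixes f :: "'a :: euclidean_space \<Rightarrow> 'a"
  assumes "linear f" "bij f"
  shows "inside (f ` S) = f ` inside S"
proof -
  have inj: "inj f" using assms(2) bij_is_inj by blast
  obtain g where "homeomorphism (f ` (- S)) (- S) g f"
    using linear_homeomorphism_image[OF assms(1) inj] by blast
  then have hom: "homeomorphism (- S) (- (f ` S)) f g"
    unfolding bij_image_Compl_eq[OF assms(2)] by (rule homeomorphism_symD)
  obtain h where "linear h" "h \<circ> f = id" using linear_injective_left_inverse[OF assms(1) inj] by blast
  have bounded_iff: "bounded (f ` C) \<longleftrightarrow> bounded C" for C
  proof
    assume "bounded (f ` C)"
    then have "bounded (h ` f ` C)"
      using bounded_linear_image \<open>linear h\<close> linear_conv_bounded_linear by blast
    then show "bounded C" using \<open>h \<circ> f = id\<close> by (simp add: image_comp)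
  qed (use bounded_linear_image assms(1) linear_conv_bounded_linear in blast)
  have pointwise: "f x \<in> inside (f ` S) \<longleftrightarrow> x \<in> inside S" for x
  proof (cases "x \<in> S")
    case False
    then have "connected_component_set (- (f ` S)) (f x) = f ` connected_component_set (- S) x"
      using connected_component_set_homeomorphism[OF hom] by simp
    then show ?thesis
      using False bounded_iff by (simp add: inside_def inj_image_mem_iff[OF inj])
  qed (simp add: inside_def inj_image_mem_iff[OF inj])
  show ?thesis
  proof (intro set_eqI)
    fix z
    obtain x where "z = f x" using bij_pointE[OF assms(2)] by metis
    then show "z \<in> inside (f ` S) \<longleftrightarrow> z \<in> f ` inside S"
      using pointwise by (simp add: inj_image_mem_iff[OF inj])
  qed
qed

lemma single_segment_linear_image:
  "linear f \<Longrightarrow> single_segment S \<Longrightarrow> single_segment (f ` S)"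
  unfolding single_segment_def by (metis closed_segment_linear_image image_is_empty)

definition rot :: "pt \<Rightarrow> pt" where
  "rot z = (- snd z, fst z)"

lemma fst_rot [simp]: "fst (rot z) = - snd z"
  and snd_rot [simp]: "snd (rot z) = fst z"
  by (simp_all add: rot_def)

lemma orthogonal_transformation_rot: "orthogonal_transformation rot"
  unfolding orthogonal_transformation_def
  by (auto simp: rot_def inner_prod_def intro!: linearI)

lemma linear_rot: "linear rot"
  and inj_rot: "inj rot"
  and bij_rot: "bij rot"
  using orthogonal_transformation_rot orthogonal_transformation_linear orthogonal_transformation_inj
    orthogonal_transformation_bij by blast+

lemma rot_in_image_iff [simp]: "rot x \<in> rot ` A \<longleftrightarrow> x \<in> A"
  using inj_rot by (rule inj_image_mem_iff)

lemma rot_image_eq_iff [simp]: "rot ` A = rot ` B \<longleftrightarrow> A = B"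
  using inj_rot by (rule inj_image_eq_iff)

context
  fixes vs :: "pt list"
  assumes nonempty: "vs \<noteq> []"
begin

lemma vtx_map_rot: "vtx (map rot vs) i = rot (vtx vs i)"
  using nonempty by (simp add: vtx_def)

lemma edge_set_map_rot: "edge_set (map rot vs) i = rot ` edge_set vs i"
  by (simp add: edge_set_def vtx_map_rot closed_segment_linear_image[OF linear_rot])

lemma poly_boundary_map_rot: "poly_boundary (map rot vs) = rot ` poly_boundary vs"
  by (simp add: poly_boundary_def edge_set_map_rot image_UN)

lemma poly_region_map_rot: "poly_region (map rot vs) = rot ` poly_region vs"
  by (simp add: poly_region_def poly_boundary_map_rot image_Un inside_linear_image[OF linear_rot bij_rot])

lemma vertical_edge_map_rot: "vertical_edge (map rot vs) i \<longleftrightarrow> horizontal_edge vs i"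
  and horizontal_edge_map_rot: "horizontal_edge (map rot vs) i \<longleftrightarrow> vertical_edge vs i"
  by (simp_all add: vertical_edge_def horizontal_edge_def vtx_map_rot)

lemma convex_vertex_map_rot: "convex_vertex (map rot vs) i \<longleftrightarrow> convex_vertex vs i"
proof -
  define v where "v = vtx vs i"
  define u where "u = vtx vs (i + length vs - 1)"
  define w where "w = vtx vs (Suc i)"
  have "rot (v + s *\<^sub>R (u - v) + t *\<^sub>R (w - v)) = rot v + s *\<^sub>R (rot u - rot v) + t *\<^sub>R (rot w - rot v)"
    for s t by (simp add: rot_def prod_eq_iff algebra_simps)
  then have "{rot v + s *\<^sub>R (rot u - rot v) + t *\<^sub>R (rot w - rot v) | s t. 0 \<le> s \<and> 0 \<le> t} =
        {rot (v + s *\<^sub>R (u - v) + t *\<^sub>R (w - v)) | s t. 0 \<le> s \<and> 0 \<le> t}"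
    by simp
  also have "\<dots> = rot ` {v + s *\<^sub>R (u - v) + t *\<^sub>R (w - v) | s t. 0 \<le> s \<and> 0 \<le> t}"
    by blast
  finally have cone: "{rot v + s *\<^sub>R (rot u - rot v) + t *\<^sub>R (rot w - rot v) | s t. 0 \<le> s \<and> 0 \<le> t} =
        rot ` {v + s *\<^sub>R (u - v) + t *\<^sub>R (w - v) | s t. 0 \<le> s \<and> 0 \<le> t}" .
  have "{rot v + s *\<^sub>R (rot u - rot v) + t *\<^sub>R (rot w - rot v) | s t. 0 \<le> s \<and> 0 \<le> t} \<inter> ball (rot v) e
     = rot ` ({v + s *\<^sub>R (u - v) + t *\<^sub>R (w - v) | s t. 0 \<le> s \<and> 0 \<le> t} \<inter> ball v e)" for e
    by (simp only: cone image_orthogonal_transformation_ball[OF orthogonal_transformation_rot] image_Int[OF inj_rot])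
  moreover have "poly_region (map rot vs) \<inter> ball (rot v) e = rot ` (poly_region vs \<inter> ball v e)" for e
    by (simp add: poly_region_map_rot image_orthogonal_transformation_ball[OF orthogonal_transformation_rot]
        image_Int[OF inj_rot])
  moreover have "(rot u - rot v) \<bullet> (rot w - rot v) = (u - v) \<bullet> (w - v)"
    using orthogonal_transformation_rot linear_diff[OF linear_rot]
    unfolding orthogonal_transformation_def by metis
  ultimately show ?thesis
    unfolding convex_vertex_def Let_def vtx_map_rot length_map
      v_def[symmetric] u_def[symmetric] w_def[symmetric]
    by simp
qed

lemma knob_map_rot: "knob (map rot vs) i \<longleftrightarrow> knob vs i"
  by (simp add: knob_def convex_vertex_map_rot)

lemma left_outside_map_rot: "left_outside (map rot vs) i \<longleftrightarrow> above_outside vs i"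
proof -
  have "rot p - (t, 0) = rot (p + (0, t))" for p and t :: real by (simp add: rot_def)
  then show ?thesis
    unfolding left_outside_def above_outside_def vtx_map_rot poly_region_map_rot
      open_segment_linear_image[OF linear_rot inj_rot]
    by simp
qed

lemma above_outside_map_rot: "above_outside (map rot vs) i \<longleftrightarrow> right_outside vs i"
proof -
  have "rot p + (0, t) = rot (p + (t, 0))" for p and t :: real by (simp add: rot_def)
  then show ?thesis
    unfolding right_outside_def above_outside_def vtx_map_rot poly_region_map_rot
      open_segment_linear_image[OF linear_rot inj_rot]
    by simp
qed

end

lemma top_knob_iff_left_knob_map_rot:
  "vs \<noteq> [] \<Longrightarrow> top_knob vs i \<longleftrightarrow> left_knob (map rot vs) i"
  by (simp add: top_knob_def left_knob_def knob_map_rot vertical_edge_map_rot left_outside_map_rot)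

lemma bottom_knob_iff_right_knob_map_rot:
  "vs \<noteq> [] \<Longrightarrow> bottom_knob vs i \<longleftrightarrow> right_knob (map rot vs) i"
  by (simp add: bottom_knob_def right_knob_def knob_map_rot vertical_edge_map_rot left_outside_map_rot)

lemma (in orth_polygon) right_knob_iff_left_knob_map_rot2:
  "right_knob vs i \<longleftrightarrow> left_knob (map rot (map rot vs)) i"
proof -
  have ne: "vs \<noteq> []" "map rot vs \<noteq> []" using length_pos by auto
  have "knob (map rot (map rot vs)) i \<longleftrightarrow> knob vs i"
    using knob_map_rot[OF ne(2)] knob_map_rot[OF ne(1)] by simp
  moreover have "vertical_edge (map rot (map rot vs)) i \<longleftrightarrow> vertical_edge vs i"
    using vertical_edge_map_rot[OF ne(2)] horizontal_edge_map_rot[OF ne(1)] by simp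
  moreover have "left_outside (map rot (map rot vs)) i \<longleftrightarrow> right_outside vs i"
    using left_outside_map_rot[OF ne(2)] above_outside_map_rot[OF ne(1)] by simp
  ultimately show ?thesis
    unfolding right_knob_def left_knob_def using not_left_outside_iff_right_outside by blast
qed

lemma orthogonal_polygon_map_rot:
  assumes "orthogonal_polygon vs"
  shows "orthogonal_polygon (map rot vs)"
proof -
  interpret orth_polygon vs using assms by unfold_locales
  have ne: "vs \<noteq> []" using length_pos by auto
  have edges: "edge_set (map rot vs) i \<inter> edge_set (map rot vs) j =
      (if Suc i mod length vs = j then {vtx (map rot vs) (Suc i)}
       else if Suc j mod length vs = i then {vtx (map rot vs) i} else {})"
    if "i < length vs" "j < length vs" "i \<noteq> j" for i j
    using edge_Int_edge[of i j] that
    by (simp add: edge_set_map_rot[OF ne] vtx_map_rot[OF ne] image_Int[OF inj_rot, symmetric])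
  show ?thesis
    \<comment> \<open>rotation exchanges the two sides of the alternation condition, and the rotated
      form is \<open>vertical_iff_horizontal_Suc\<close>\<close>
    unfolding orthogonal_polygon_def
    using four_le_length distinct_map[of rot vs] inj_on_subset[OF inj_rot] assms edges
      vertical_or_horizontal vertical_iff_horizontal_Suc
    by (simp add: vtx_map_rot[OF ne] orthogonal_polygon_def vertical_edge_def horizontal_edge_def
        disj_commute)
qed

lemma orth_convex_polygon_map_rot:
  assumes "orth_convex_polygon vs"
  shows "orth_convex_polygon (map rot vs)"
proof -
  have op: "orthogonal_polygon vs" using assms by (simp add: orth_convex_polygon_def)
  then have ne: "vs \<noteq> []" by (auto simp: orthogonal_polygon_def)
  have "{p. fst p = c} \<inter> rot ` R = rot ` ({q. snd q = - c} \<inter> R)"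
       "{p. snd p = c} \<inter> rot ` R = rot ` ({q. fst q = c} \<inter> R)" for c R
    by force+
  moreover have "simply_connected (rot ` poly_region vs)"
    using assms homeomorphic_simply_connected linear_homeomorphic_image[OF linear_rot inj_rot]
    by (auto simp: orth_convex_polygon_def)
  ultimately show ?thesis
    using assms orthogonal_polygon_map_rot[OF op] single_segment_linear_image[OF linear_rot]
    by (simp add: orth_convex_polygon_def poly_region_map_rot[OF ne])
qed

lemma vertically_convex_if_orth_convex:
  "orth_convex_polygon vs \<Longrightarrow> vertically_convex_polygon vs"
  unfolding orth_convex_polygon_def vertically_convex_polygon_def vertically_convex_polygon_axioms_def
    orth_polygon_def
  using simply_connected_imp_connected by blast

lemma (in orth_polygon) card_knobs:
  "card {i. i < length vs \<and> knob vs i} =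
     card {i. i < length vs \<and> left_knob vs i} + card {i. i < length vs \<and> right_knob vs i} +
     card {i. i < length vs \<and> top_knob vs i} + card {i. i < length vs \<and> bottom_knob vs i}"
proof -
  define K where "K = (\<lambda>P. {i. i < length vs \<and> P vs i})"
  have "K knob = K left_knob \<union> K right_knob \<union> K top_knob \<union> K bottom_knob"
    unfolding K_def left_knob_def right_knob_def top_knob_def bottom_knob_def
    using vertical_or_horizontal by blast
  moreover have "K left_knob \<inter> K right_knob = {}" "(K left_knob \<union> K right_knob) \<inter> K top_knob = {}"
    "(K left_knob \<union> K right_knob \<union> K top_knob) \<inter> K bottom_knob = {}"
    unfolding K_def left_knob_def right_knob_def top_knob_def bottom_knob_def
    using not_vertical_and_horizontal by blast+
  moreover have "finite (K P)" for P unfolding K_def by simp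
  ultimately have "card (K knob) =
      card (K left_knob) + card (K right_knob) + card (K top_knob) + card (K bottom_knob)"
    by (simp add: card_Un_disjoint)
  then show ?thesis by (simp add: K_def)
qed

lemma card_left_knobs_if_orth_convex:
  "orth_convex_polygon vs \<Longrightarrow> card {i. i < length vs \<and> left_knob vs i} = 1"
  using vertically_convex_polygon.card_left_knobs vertically_convex_if_orth_convex by blast

lemma card_right_knobs_if_orth_convex:
  assumes "orth_convex_polygon vs"
  shows "card {i. i < length vs \<and> right_knob vs i} = 1"
proof -
  interpret orth_polygon vs using assms by (simp add: orth_convex_polygon_def orth_polygon_def)
  have "orth_convex_polygon (map rot (map rot vs))"
    using orth_convex_polygon_map_rot assms by blast
  then show ?thesis
    using card_left_knobs_if_orth_convex[of "map rot (map rot vs)"]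
    by (simp only: right_knob_iff_left_knob_map_rot2 length_map)
qed

theorem lemma6p17:
  fixes vs :: "(real \<times> real) list"
  assumes "orth_convex_polygon vs"
  shows "card {i. i < length vs \<and> knob vs i} = 4 \<and>
         card {i. i < length vs \<and> left_knob vs i} = 1 \<and>
         card {i. i < length vs \<and> right_knob vs i} = 1 \<and>
         card {i. i < length vs \<and> top_knob vs i} = 1 \<and>
         card {i. i < length vs \<and> bottom_knob vs i} = 1"
proof -
  interpret orth_polygon vs using assms by (simp add: orth_convex_polygon_def orth_polygon_def)
  have rotated: "orth_convex_polygon (map rot vs)" and "vs \<noteq> []"
    using orth_convex_polygon_map_rot[OF assms] length_pos by auto
  have "card {i. i < length vs \<and> top_knob vs i} = 1"
    using card_left_knobs_if_orth_convex[OF rotated]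
    by (simp only: top_knob_iff_left_knob_map_rot[OF \<open>vs \<noteq> []\<close>] length_map)
  moreover have "card {i. i < length vs \<and> bottom_knob vs i} = 1"
    using card_right_knobs_if_orth_convex[OF rotated]
    by (simp only: bottom_knob_iff_right_knob_map_rot[OF \<open>vs \<noteq> []\<close>] length_map)
  ultimately show ?thesis
    using card_knobs card_left_knobs_if_orth_convex[OF assms] card_right_knobs_if_orth_convex[OF assms]
    by simp
qed

end
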